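(* Let $\vec G$ be an orientation of the Coxeter diagram $s_1-\cdots-s_{n-1}$ of $S_n$, with up and down indices determined as described below. Then the Cambrian lattice $\mathcal C(\vec G)$ is isomorphic to the subposet of the weak order on $S_n$ consisting of the permutations that avoid both $\bar{2}31$ and $31\underline{2}$.
   Context: Weak order on $S_n$: $x\le y$ iff $I(x)\subseteq I(y)$, $I(x)=\{(x_j,x_i):i<j,x_i>x_j\}$; $s_i=(i,i+1)$. $\Theta(\vec G)$ is the smallest lattice congruence of the weak order with $t\equiv ts$ for every directed edge $s\to t$; $\mathcal C(\vec G)$ is the quotient lattice. Up/down indices: for $b\in[2,n-1]$, $b$ is up if $s_b\to s_{b-1}$ in $\vec G$ and down if $s_{b-1}\to s_b$; the indices $1$ and $n$ are declared up or down arbitrarily. A permutation $x=x_1\cdots x_n$ contains $\bar{2}31$ if there are $i<j<k$ with $x_k<x_i<x_j$ and $x_i$ up; it contains $31\underline{2}$ if there are $i<j<k$ with $x_j<x_k<x_i$ and $x_k$ down; otherwise it avoids the pattern. *)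

theory Defs
  imports Main
begin

text \<open>Permutations of [n] in one-line notation: a list x = [x_1,...,x_n]
  (0-indexed in Isabelle: x_i = x ! (i-1)).\<close>

definition perms :: "nat \<Rightarrow> nat list set" where
  "perms n = {xs. distinct xs \<and> set xs = {1..n}}"

text \<open>Product of permutations as composition of maps: (x y)(k) = x(y(k)).\<close>
definition pmult :: "nat list \<Rightarrow> nat list \<Rightarrow> nat list" where
  "pmult x y = map (\<lambda>v. x ! (v - 1)) y"

definition stransp :: "nat \<Rightarrow> nat \<Rightarrow> nat list" where
  "stransp n i = map (\<lambda>k. if k = i then i + 1 else if k = i + 1 then i else k) [1..<n+1]"

definition inversions :: "nat list \<Rightarrow> (nat \<times> nat) set" where
  "inversions x = {(x ! j, x ! i) | i j. i < j \<and> j < length x \<and> x ! i > x ! j}"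

definition weak_le :: "nat list \<Rightarrow> nat list \<Rightarrow> bool" where
  "weak_le x y \<longleftrightarrow> inversions x \<subseteq> inversions y"

definition is_meet :: "nat \<Rightarrow> nat list \<Rightarrow> nat list \<Rightarrow> nat list \<Rightarrow> bool" where
  "is_meet n x y m \<longleftrightarrow> m \<in> perms n \<and> weak_le m x \<and> weak_le m y \<and>
     (\<forall>z\<in>perms n. weak_le z x \<and> weak_le z y \<longrightarrow> weak_le z m)"

definition is_join :: "nat \<Rightarrow> nat list \<Rightarrow> nat list \<Rightarrow> nat list \<Rightarrow> bool" where
  "is_join n x y m \<longleftrightarrow> m \<in> perms n \<and> weak_le x m \<and> weak_le y m \<and>
     (\<forall>z\<in>perms n. weak_le x z \<and> weak_le y z \<longrightarrow> weak_le m z)"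

definition lattice_cong :: "nat \<Rightarrow> (nat list \<times> nat list) set \<Rightarrow> bool" where
  "lattice_cong n R \<longleftrightarrow> equiv (perms n) R \<and>
     (\<forall>x y z m m'. (x, y) \<in> R \<and> z \<in> perms n \<and> is_meet n x z m \<and> is_meet n y z m'
        \<longrightarrow> (m, m') \<in> R) \<and>
     (\<forall>x y z m m'. (x, y) \<in> R \<and> z \<in> perms n \<and> is_join n x z m \<and> is_join n y z m'
        \<longrightarrow> (m, m') \<in> R)"

text \<open>An orientation of the Coxeter diagram s_1 - ... - s_{n-1};
  E i j means the directed edge s_i \<rightarrow> s_j.\<close>
definition orientation :: "nat \<Rightarrow> (nat \<Rightarrow> nat \<Rightarrow> bool) \<Rightarrow> bool" where
  "orientation n E \<longleftrightarrow>
     (\<forall>i j. E i j \<longrightarrow> 1 \<le> i \<and> i \<le> n - 1 \<and> 1 \<le> j \<and> j \<le> n - 1 \<and> (j = i + 1 \<or> i = j + 1)) \<and>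
     (\<forall>i. 1 \<le> i \<and> i + 2 \<le> n \<longrightarrow> (E i (i + 1) \<longleftrightarrow> \<not> E (i + 1) i))"

definition cambrian_cong :: "nat \<Rightarrow> (nat \<Rightarrow> nat \<Rightarrow> bool) \<Rightarrow> (nat list \<times> nat list) set" where
  "cambrian_cong n E = \<Inter> {R. lattice_cong n R \<and>
     (\<forall>i j. E i j \<longrightarrow> (stransp n j, pmult (stransp n j) (stransp n i)) \<in> R)}"

text \<open>Order of the quotient lattice: [x] \<le> [y] iff [x \<and> y] = [x].\<close>
definition quot_le :: "nat \<Rightarrow> (nat list \<times> nat list) set \<Rightarrow> nat list set \<Rightarrow> nat list set \<Rightarrow> bool" where
  "quot_le n R X Y \<longleftrightarrow> (\<exists>x\<in>X. \<exists>y\<in>Y. \<exists>m. is_meet n x y m \<and> m \<in> X)"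

text \<open>Pattern containment; "down" means "not up".\<close>
definition contains_bar231 :: "(nat \<Rightarrow> bool) \<Rightarrow> nat list \<Rightarrow> bool" where
  "contains_bar231 up x \<longleftrightarrow> (\<exists>i j k. i < j \<and> j < k \<and> k < length x \<and>
     x ! k < x ! i \<and> x ! i < x ! j \<and> up (x ! i))"

definition contains_312under :: "(nat \<Rightarrow> bool) \<Rightarrow> nat list \<Rightarrow> bool" where
  "contains_312under up x \<longleftrightarrow> (\<exists>i j k. i < j \<and> j < k \<and> k < length x \<and>
     x ! j < x ! k \<and> x ! k < x ! i \<and> \<not> up (x ! k))"

definition avoiders :: "nat \<Rightarrow> (nat \<Rightarrow> bool) \<Rightarrow> nat list set" where
  "avoiders n up = {x \<in> perms n. \<not> contains_bar231 up x \<and> \<not> contains_312under up x}"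

end

theory Submission
  imports Defs
begin

text \<open>Call the swap of an adjacent ascent (a, b) of x contracted if some value c with a < c < b
  is up and lies to the left of the pair, or is down and lies to the right of it. Contracted swaps
  preserve two closure operators pi_down and pi_up on inversion sets, so walking down or up along
  them from x ends at a permutation with inversion set pi_down (I x), resp. pi_up (I x); the
  permutations reached downwards are exactly the pattern avoiders. Conversely, every lattice
  congruence containing the generating pairs of Theta(G) contains all contracted swaps, by
  induction on b - a through the square and hexagon relations of the weak order. Hence Theta(G)
  is the kernel of x \<mapsto> pi_down (I x), each class contains exactly one avoider (its bottom
  element), and the quotient order is the weak order on avoiders.\<close>

lemma nat_predicate_switch:
  fixes P :: "nat \<Rightarrow> bool"
  assumes "j \<le> k" "P j" "\<not> P k"
  shows "\<exists>p. j \<le> p \<and> p < k \<and> P p \<and> \<not> P (p + 1)"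
  using assms
proof (induction k)
  case (Suc k)
  then have "j \<le> k"
    by (metis le_Suc_eq)
  show ?case
  proof (cases "P k")
    case True
    then show ?thesis
      using \<open>j \<le> k\<close> Suc.prems by auto
  next
    case False
    then show ?thesis
      using Suc.IH \<open>j \<le> k\<close> Suc.prems less_SucI by blast
  qed
qed simp

lemma sorted_wrt_asym_unique:
  assumes "sorted_wrt P xs" "sorted_wrt P ys" "distinct xs" "distinct ys" "set xs = set ys"
    and asym: "\<And>u v. P u v \<Longrightarrow> \<not> P v u"
  shows "xs = ys"
  using assms(1-5)
proof (induction xs arbitrary: ys)
  case Nil
  then show ?case by simp
next
  case (Cons a xs)
  then obtain b ys' where ys: "ys = b # ys'"
    by (cases ys) auto
  show ?case
  proof (cases "a = b")
    case True
    then have "set xs = set ys'"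
      using Cons.prems ys by (metis distinct.simps(2) list.simps(15) insert_ident)
    then show ?thesis
      using Cons.IH[of ys'] Cons.prems ys True by simp
  next
    case False
    then have "b \<in> set xs" "a \<in> set ys'"
      using Cons.prems(5) ys by auto
    then have "P a b" "P b a"
      using Cons.prems(1,2) ys by auto
    then show ?thesis
      using asym by blast
  qed
qed

lemma wf_converse_rtrancl_maximal:
  assumes "wf (r\<inverse>)"
  obtains z where "(x, z) \<in> r\<^sup>*" "\<And>y. (z, y) \<notin> r"
proof -
  obtain z where z: "(x, z) \<in> r\<^sup>*" and max: "\<And>y. (y, z) \<in> r\<inverse> \<Longrightarrow> (x, y) \<notin> r\<^sup>*"
    using wfE_min[OF assms, of x "{z. (x, z) \<in> r\<^sup>*}"] by auto
  have "(z, y) \<notin> r" for y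
    using max[of y] z by (meson converseI rtrancl.rtrancl_into_rtrancl)
  then show thesis
    using that z by blast
qed

section \<open>Adjacent swaps and inversion sets\<close>

definition swap_at :: "nat list \<Rightarrow> nat \<Rightarrow> nat list" where
  "swap_at x p = x[p := x ! (p + 1), p + 1 := x ! p]"

lemma length_swap_at [simp]: "length (swap_at x p) = length x"
  by (simp add: swap_at_def)

lemma nth_swap_at:
  "p + 1 < length x \<Longrightarrow> k < length x \<Longrightarrow>
     swap_at x p ! k = (if k = p then x ! (p + 1) else if k = p + 1 then x ! p else x ! k)"
  by (auto simp: swap_at_def nth_list_update)

lemma nth_swap_at_simps [simp]:
  "Suc p < length x \<Longrightarrow> swap_at x p ! p = x ! Suc p"
  "Suc p < length x \<Longrightarrow> swap_at x p ! Suc p = x ! p"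
  "k \<noteq> p \<Longrightarrow> k \<noteq> Suc p \<Longrightarrow> swap_at x p ! k = x ! k"
  by (auto simp: swap_at_def nth_list_update)

lemma swap_at_swap_at: "p + 1 < length x \<Longrightarrow> swap_at (swap_at x p) p = x"
  by (rule nth_equalityI) (auto simp: nth_swap_at)

lemma length_perms: "x \<in> perms n \<Longrightarrow> length x = n"
  unfolding perms_def using distinct_card by fastforce

lemma distinct_perms: "x \<in> perms n \<Longrightarrow> distinct x"
  unfolding perms_def by simp

lemma perms_nth_range: "x \<in> perms n \<Longrightarrow> i < n \<Longrightarrow> 1 \<le> x ! i \<and> x ! i \<le> n"
  using nth_mem[of i x] length_perms[of x n] unfolding perms_def by auto

lemma perms_position:
  assumes "x \<in> perms n" "1 \<le> v" "v \<le> n"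
  obtains i where "i < n" "x ! i = v"
proof -
  have "v \<in> set x" using assms unfolding perms_def by simp
  then show thesis using that length_perms[OF assms(1)] by (auto simp: in_set_conv_nth)
qed

lemma perms_nth_eq_iff: "x \<in> perms n \<Longrightarrow> i < n \<Longrightarrow> j < n \<Longrightarrow> x ! i = x ! j \<longleftrightarrow> i = j"
  using distinct_perms length_perms nth_eq_iff_index_eq by metis

lemma swap_at_in_perms: "x \<in> perms n \<Longrightarrow> p + 1 < n \<Longrightarrow> swap_at x p \<in> perms n"
  using length_perms[of x n] unfolding perms_def swap_at_def by simp

lemma inversions_iff:
  "(u, v) \<in> inversions x \<longleftrightarrow> (\<exists>i<length x. \<exists>j<length x. u = x ! i \<and> v = x ! j \<and> j < i \<and> u < v)"
  unfolding inversions_def by (simp; blast dest: less_trans)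

lemma inversionsE:
  assumes "(u, v) \<in> inversions x"
  obtains i j where "i < length x" "j < length x" "u = x ! i" "v = x ! j" "j < i" "u < v"
  using assms unfolding inversions_iff by blast

lemma inversions_nth_iff:
  assumes "distinct x" "i < length x" "j < length x"
  shows "(x ! i, x ! j) \<in> inversions x \<longleftrightarrow> j < i \<and> x ! i < x ! j"
  using assms unfolding inversions_iff by (auto simp: nth_eq_iff_index_eq)

lemma inversions_sorted:
  assumes "sorted x"
  shows "inversions x = {}"
proof -
  have "(u, v) \<notin> inversions x" for u v
  proof
    assume "(u, v) \<in> inversions x"
    then obtain i j where "i < length x" "u = x ! i" "v = x ! j" "j < i" "u < v"
      by (auto elim: inversionsE)
    then show False
      using sorted_nth_mono[OF assms, of j i] by simp
  qed
  then show ?thesis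
    by auto
qed

lemma inversions_swap_at:
  assumes dist: "distinct x" and p: "p + 1 < length x"
  shows "inversions (swap_at x p) =
    (if x ! p < x ! (p + 1) then insert (x ! p, x ! (p + 1)) (inversions x)
     else inversions x - {(x ! (p + 1), x ! p)})"
proof -
  define t where "t k = (if k = p then p + 1 else if k = p + 1 then p else k)" for k
  have t_lt: "k < length x \<Longrightarrow> t k < length x" for k
    using p by (auto simp: t_def)
  have t_t: "t (t k) = k" for k
    by (auto simp: t_def)
  have nth_t: "k < length x \<Longrightarrow> swap_at x p ! k = x ! t k" for k
    using p by (auto simp: t_def nth_swap_at)
  have reindex: "(u, v) \<in> inversions (swap_at x p) \<longleftrightarrow>
      (\<exists>i<length x. \<exists>j<length x. u = x ! i \<and> v = x ! j \<and> t j < t i \<and> u < v)" for u v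
  proof
    assume "(u, v) \<in> inversions (swap_at x p)"
    then obtain i j where "i < length x" "j < length x" "u = x ! t i" "v = x ! t j" "j < i" "u < v"
      by (auto elim!: inversionsE simp: nth_t)
    then show "\<exists>i<length x. \<exists>j<length x. u = x ! i \<and> v = x ! j \<and> t j < t i \<and> u < v"
      using t_lt t_t by metis
  next
    assume "\<exists>i<length x. \<exists>j<length x. u = x ! i \<and> v = x ! j \<and> t j < t i \<and> u < v"
    then obtain i j where "i < length x" "j < length x" "u = x ! i" "v = x ! j" "t j < t i" "u < v"
      by blast
    then show "(u, v) \<in> inversions (swap_at x p)"
      unfolding inversions_iff using t_lt t_t nth_t by (metis length_swap_at)
  qed
  have t_less: "t j < t i \<longleftrightarrow> (j < i \<and> \<not> (j = p \<and> i = p + 1)) \<or> (i = p \<and> j = p + 1)" for i j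
    by (auto simp: t_def)
  have "(u, v) \<in> inversions (swap_at x p) \<longleftrightarrow>
      ((u, v) \<in> inversions x \<and> (u, v) \<noteq> (x ! (p + 1), x ! p)) \<or>
      ((u, v) = (x ! p, x ! (p + 1)) \<and> x ! p < x ! (p + 1))" for u v
    unfolding reindex
    unfolding t_less inversions_iff
    using dist p by (auto simp: nth_eq_iff_index_eq) (use Suc_lessD in blast)
  moreover have "x ! p < x ! (p + 1) \<Longrightarrow> (x ! (p + 1), x ! p) \<notin> inversions x"
    using inversions_nth_iff[OF dist p, of p] p by simp
  ultimately show ?thesis
    by auto
qed

lemma inversions_swap_at_ascent:
  "x \<in> perms n \<Longrightarrow> p + 1 < n \<Longrightarrow> x ! p < x ! (p + 1) \<Longrightarrow>
     inversions (swap_at x p) = insert (x ! p, x ! (p + 1)) (inversions x)"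
  using inversions_swap_at[of x p] distinct_perms length_perms by simp

lemma inversions_swap_at_descent:
  "x \<in> perms n \<Longrightarrow> p + 1 < n \<Longrightarrow> x ! (p + 1) < x ! p \<Longrightarrow>
     inversions (swap_at x p) = inversions x - {(x ! (p + 1), x ! p)}"
  using inversions_swap_at[of x p] distinct_perms length_perms by simp

lemma perms_inversion:
  "x \<in> perms n \<Longrightarrow> i < j \<Longrightarrow> j < n \<Longrightarrow> x ! j < x ! i \<Longrightarrow> (x ! j, x ! i) \<in> inversions x"
  using inversions_nth_iff[of x j i] distinct_perms length_perms by simp

lemma perms_not_inversion:
  "x \<in> perms n \<Longrightarrow> i < j \<Longrightarrow> j < n \<Longrightarrow> x ! i < x ! j \<Longrightarrow> (x ! i, x ! j) \<notin> inversions x"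
  using inversions_nth_iff[of x i j] distinct_perms length_perms by simp

lemma inversions_subset: "inversions x \<subseteq> set x \<times> set x"
  by (auto elim!: inversionsE)

lemma perms_inversions_subset: "x \<in> perms n \<Longrightarrow> inversions x \<subseteq> {1..n} \<times> {1..n}"
  using inversions_subset unfolding perms_def by blast

lemma finite_inversions: "finite (inversions x)"
  using inversions_subset finite_subset by blast

lemma perms_inversions_trans:
  assumes x: "x \<in> perms n" and "(a, b) \<in> inversions x" "(b, c) \<in> inversions x"
  shows "(a, c) \<in> inversions x"
proof -
  obtain i j where ij: "i < n" "j < n" "a = x ! i" "b = x ! j" "j < i" "a < b"
    using assms(2) length_perms[OF x] by (auto elim!: inversionsE)
  obtain j' k where jk: "j' < n" "k < n" "b = x ! j'" "c = x ! k" "k < j'" "b < c"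
    using assms(3) length_perms[OF x] by (auto elim!: inversionsE)
  have "j' = j"
    using ij jk perms_nth_eq_iff[OF x] by metis
  then show ?thesis
    using ij jk perms_inversion[OF x, of k i] by simp
qed

lemma perms_inversion_split:
  assumes x: "x \<in> perms n" and ac: "(a, c) \<in> inversions x" and "a < b" "b < c"
  shows "(a, b) \<in> inversions x \<or> (b, c) \<in> inversions x"
proof -
  obtain i k where ik: "i < n" "k < n" "a = x ! i" "c = x ! k" "k < i"
    using ac length_perms[OF x] by (auto elim!: inversionsE)
  obtain j where j: "j < n" "x ! j = b"
    using perms_position[OF x, of b] perms_nth_range[OF x] ik assms(3,4) by (metis le_trans less_imp_le)
  have "k < j \<or> j < i"
    using ik by linarith
  then show ?thesis
    using perms_inversion[OF x] ik j assms(3,4) by auto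
qed

text \<open>The relation below says that u occurs before v in x, and it depends on x only through
  its inversion set.\<close>

lemma sorted_wrt_inversion_order:
  assumes "distinct x"
  shows "sorted_wrt (\<lambda>u v. u < v \<and> (u, v) \<notin> inversions x \<or> v < u \<and> (v, u) \<in> inversions x) x"
  unfolding sorted_wrt_iff_nth_less
proof (intro allI impI)
  fix i j assume ij: "i < j" "j < length x"
  then have "x ! i \<noteq> x ! j"
    using assms by (simp add: nth_eq_iff_index_eq)
  then consider "x ! i < x ! j" | "x ! j < x ! i"
    by linarith
  then show "x ! i < x ! j \<and> (x ! i, x ! j) \<notin> inversions x \<or>
      x ! j < x ! i \<and> (x ! j, x ! i) \<in> inversions x"
    by cases (use inversions_nth_iff[OF assms, of i j] inversions_nth_iff[OF assms, of j i] ij in auto)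
qed

lemma perms_inversions_inject:
  assumes x: "x \<in> perms n" and y: "y \<in> perms n" and eq: "inversions x = inversions y"
  shows "x = y"
proof (rule sorted_wrt_asym_unique)
  let ?P = "\<lambda>u v. u < v \<and> (u, v) \<notin> inversions x \<or> v < u \<and> (v, u) \<in> inversions x"
  show "sorted_wrt ?P x"
    by (rule sorted_wrt_inversion_order[OF distinct_perms[OF x]])
  show "sorted_wrt ?P y"
    using sorted_wrt_inversion_order[OF distinct_perms[OF y]] eq by simp
  show "distinct x" "distinct y"
    using x y by (auto intro: distinct_perms)
  show "set x = set y"
    using x y unfolding perms_def by simp
  show "?P u v \<Longrightarrow> \<not> ?P v u" for u v
    by auto
qed

section \<open>The projections on inversion sets\<close>

text \<open>pi_down up I and pi_up up n I are the inversion sets of the bottom and the top element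
  of the Cambrian class of a permutation with inversion set I (Reading's projections).\<close>

inductive_set pi_down :: "(nat \<Rightarrow> bool) \<Rightarrow> (nat \<times> nat) set \<Rightarrow> (nat \<times> nat) set"
  for up :: "nat \<Rightarrow> bool" and I :: "(nat \<times> nat) set" where
  "(a, b) \<in> I \<Longrightarrow>
   (\<forall>c. a < c \<and> c < b \<and> up c \<longrightarrow> (c, b) \<in> pi_down up I) \<Longrightarrow>
   (\<forall>c. a < c \<and> c < b \<and> \<not> up c \<longrightarrow> (a, c) \<in> pi_down up I) \<Longrightarrow>
   (a, b) \<in> pi_down up I"

inductive_set pi_up :: "(nat \<Rightarrow> bool) \<Rightarrow> nat \<Rightarrow> (nat \<times> nat) set \<Rightarrow> (nat \<times> nat) set"
  for up :: "nat \<Rightarrow> bool" and n :: nat and I :: "(nat \<times> nat) set" where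
  base: "(a, b) \<in> I \<Longrightarrow> (a, b) \<in> pi_up up n I"
| up_right: "(a, c) \<in> pi_up up n I \<Longrightarrow> a < c \<Longrightarrow> c < b \<Longrightarrow> b \<le> n \<Longrightarrow> up c \<Longrightarrow>
    (a, b) \<in> pi_up up n I"
| down_left: "(c, b) \<in> pi_up up n I \<Longrightarrow> a < c \<Longrightarrow> c < b \<Longrightarrow> 1 \<le> a \<Longrightarrow> \<not> up c \<Longrightarrow>
    (a, b) \<in> pi_up up n I"

lemma pi_down_subset: "pi_down up I \<subseteq> I"
  by (auto elim: pi_down.cases)

lemma pi_downD:
  assumes "(a, b) \<in> pi_down up I" "a < c" "c < b"
  shows "up c \<Longrightarrow> (c, b) \<in> pi_down up I" and "\<not> up c \<Longrightarrow> (a, c) \<in> pi_down up I"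
  using assms by (auto elim: pi_down.cases)

lemma pi_down_mono: "I \<subseteq> I' \<Longrightarrow> pi_down up I \<subseteq> pi_down up I'"
proof (rule subrelI)
  fix a b assume "(a, b) \<in> pi_down up I" "I \<subseteq> I'"
  then show "(a, b) \<in> pi_down up I'"
    by (induction rule: pi_down.induct) (auto intro: pi_down.intros)
qed

lemma pi_down_idem: "pi_down up (pi_down up I) = pi_down up I"
proof
  show "pi_down up I \<subseteq> pi_down up (pi_down up I)"
  proof (rule subrelI)
    fix a b assume "(a, b) \<in> pi_down up I"
    then show "(a, b) \<in> pi_down up (pi_down up I)"
      by (induction rule: pi_down.induct) (auto intro: pi_down.intros)
  qed
qed (rule pi_down_subset)

lemma pi_down_Diff:
  assumes "z \<notin> pi_down up I"
  shows "pi_down up (I - {z}) = pi_down up I"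
proof
  show "pi_down up I \<subseteq> pi_down up (I - {z})"
  proof (rule subrelI)
    fix a b assume "(a, b) \<in> pi_down up I"
    then show "(a, b) \<in> pi_down up (I - {z})"
    proof (induction rule: pi_down.induct)
      case (1 a b)
      then have "(a, b) \<in> pi_down up I"
        by (auto intro: pi_down.intros)
      then show ?case
        using 1 assms by (auto intro: pi_down.intros)
    qed
  qed
qed (rule pi_down_mono, blast)

lemma pi_down_insert:
  assumes "a < c" "c < b" "up c \<Longrightarrow> (c, b) \<notin> I" "\<not> up c \<Longrightarrow> (a, c) \<notin> I"
  shows "pi_down up (insert (a, b) I) = pi_down up I"
proof -
  have "(a, b) \<notin> pi_down up (insert (a, b) I)"
  proof
    assume ab: "(a, b) \<in> pi_down up (insert (a, b) I)"
    show False
    proof (cases "up c")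
      case True
      then have "(c, b) \<in> insert (a, b) I"
        using pi_downD(1)[OF ab assms(1,2)] pi_down_subset by blast
      then show False using True assms by auto
    next
      case False
      then have "(a, c) \<in> insert (a, b) I"
        using pi_downD(2)[OF ab assms(1,2)] pi_down_subset by blast
      then show False using False assms by auto
    qed
  qed
  moreover have "(a, b) \<notin> pi_down up I"
    using calculation pi_down_mono[of I "insert (a, b) I"] by blast
  ultimately show ?thesis
    using pi_down_Diff[of "(a, b)" up I] pi_down_Diff[of "(a, b)" up "insert (a, b) I"] by simp
qed

lemma pi_down_eq_self:
  assumes up_closed: "\<And>a b c. (a, b) \<in> I \<Longrightarrow> a < c \<Longrightarrow> c < b \<Longrightarrow> up c \<Longrightarrow> (c, b) \<in> I"
    and down_closed: "\<And>a b c. (a, b) \<in> I \<Longrightarrow> a < c \<Longrightarrow> c < b \<Longrightarrow> \<not> up c \<Longrightarrow> (a, c) \<in> I"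
  shows "pi_down up I = I"
proof
  have "(a, b) \<in> I \<longrightarrow> (a, b) \<in> pi_down up I" for a b
  proof (induction "b - a" arbitrary: a b rule: less_induct)
    case less
    show ?case
    proof
      assume ab: "(a, b) \<in> I"
      show "(a, b) \<in> pi_down up I"
      proof (rule pi_down.intros[OF ab]; intro allI impI)
        fix c assume "a < c \<and> c < b \<and> up c"
        then show "(c, b) \<in> pi_down up I"
          using less.hyps[of b c] up_closed[OF ab] by auto
      next
        fix c assume "a < c \<and> c < b \<and> \<not> up c"
        then show "(a, c) \<in> pi_down up I"
          using less.hyps[of c a] down_closed[OF ab] by auto
      qed
    qed
  qed
  then show "I \<subseteq> pi_down up I"
    by auto
qed (rule pi_down_subset)

lemma pi_up_ext: "I \<subseteq> pi_up up n I"
  by (auto intro: pi_up.base)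

lemma pi_up_mono: "I \<subseteq> I' \<Longrightarrow> pi_up up n I \<subseteq> pi_up up n I'"
proof (rule subrelI)
  fix a b assume "(a, b) \<in> pi_up up n I" "I \<subseteq> I'"
  then show "(a, b) \<in> pi_up up n I'"
    by (induction rule: pi_up.induct) (auto intro: pi_up.intros)
qed

lemma pi_up_idem: "pi_up up n (pi_up up n I) = pi_up up n I"
proof
  show "pi_up up n (pi_up up n I) \<subseteq> pi_up up n I"
  proof (rule subrelI)
    fix a b assume "(a, b) \<in> pi_up up n (pi_up up n I)"
    then show "(a, b) \<in> pi_up up n I"
      by (induction rule: pi_up.induct) (auto intro: pi_up.intros)
  qed
qed (rule pi_up_ext)

lemma pi_up_insert: "z \<in> pi_up up n I \<Longrightarrow> pi_up up n (insert z I) = pi_up up n I"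
  using pi_up_mono[of "insert z I" "pi_up up n I" up n] pi_up_mono[of I "insert z I" up n]
    pi_up_ext[of I up n] pi_up_idem[of up n I] by blast

lemma pi_up_eq_self:
  assumes up_closed: "\<And>a b c. (a, c) \<in> I \<Longrightarrow> a < c \<Longrightarrow> c < b \<Longrightarrow> b \<le> n \<Longrightarrow> up c \<Longrightarrow> (a, b) \<in> I"
    and down_closed: "\<And>a b c. (c, b) \<in> I \<Longrightarrow> a < c \<Longrightarrow> c < b \<Longrightarrow> 1 \<le> a \<Longrightarrow> \<not> up c \<Longrightarrow> (a, b) \<in> I"
  shows "pi_up up n I = I"
proof
  show "pi_up up n I \<subseteq> I"
  proof (rule subrelI)
    fix a b assume "(a, b) \<in> pi_up up n I"
    then show "(a, b) \<in> I"
      by (induction rule: pi_up.induct) (auto intro: up_closed down_closed)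
  qed
qed (rule pi_up_ext)

section \<open>Contracted swaps\<close>

text \<open>The covers x < swap_at x p contracted by the Cambrian congruence.\<close>

definition contracted_at :: "(nat \<Rightarrow> bool) \<Rightarrow> nat list \<Rightarrow> nat \<Rightarrow> bool" where
  "contracted_at up x p \<longleftrightarrow> (\<exists>q<length x. x ! p < x ! q \<and> x ! q < x ! (p + 1) \<and>
     (q < p \<and> up (x ! q) \<or> p + 1 < q \<and> \<not> up (x ! q)))"

lemma contracted_atI:
  "q < length x \<Longrightarrow> x ! q = c \<Longrightarrow> x ! p < c \<Longrightarrow> c < x ! (p + 1) \<Longrightarrow>
     q < p \<and> up c \<or> p + 1 < q \<and> \<not> up c \<Longrightarrow> contracted_at up x p"
  unfolding contracted_at_def by blast

lemma contracted_atE: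
  assumes "contracted_at up x p"
  obtains q c where "q < length x" "x ! q = c" "x ! p < c" "c < x ! (p + 1)"
    "q < p \<and> up c \<or> p + 1 < q \<and> \<not> up c"
  using assms unfolding contracted_at_def by blast

definition cambrian_step :: "nat \<Rightarrow> (nat \<Rightarrow> bool) \<Rightarrow> (nat list \<times> nat list) set" where
  "cambrian_step n up = {(x, swap_at x p) | x p. x \<in> perms n \<and> p + 1 < n \<and> contracted_at up x p}"

lemma cambrian_stepI:
  "x \<in> perms n \<Longrightarrow> p + 1 < n \<Longrightarrow> contracted_at up x p \<Longrightarrow> (x, swap_at x p) \<in> cambrian_step n up"
  unfolding cambrian_step_def by blast

lemma cambrian_stepE:
  assumes "(x, y) \<in> cambrian_step n up"
  obtains p where "x \<in> perms n" "p + 1 < n" "contracted_at up x p" "y = swap_at x p"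
  using assms unfolding cambrian_step_def by blast

lemma pi_down_swap_contracted:
  assumes x: "x \<in> perms n" and p: "p + 1 < n" and "contracted_at up x p"
  shows "pi_down up (inversions (swap_at x p)) = pi_down up (inversions x)"
proof -
  obtain q c where q: "q < n" "x ! q = c" "x ! p < c" "c < x ! (p + 1)"
    "q < p \<and> up c \<or> p + 1 < q \<and> \<not> up c"
    using assms(3) length_perms[OF x] by (auto elim: contracted_atE)
  have "inversions (swap_at x p) = insert (x ! p, x ! (p + 1)) (inversions x)"
    using inversions_swap_at_ascent[OF x p] q by simp
  moreover have "up c \<Longrightarrow> (c, x ! (p + 1)) \<notin> inversions x"
    using perms_not_inversion[OF x, of q "p + 1"] p q by auto
  moreover have "\<not> up c \<Longrightarrow> (x ! p, c) \<notin> inversions x"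
    using perms_not_inversion[OF x, of p q] q by auto
  ultimately show ?thesis
    using pi_down_insert[of "x ! p" c "x ! (p + 1)"] q by simp
qed

lemma pi_up_swap_contracted:
  assumes x: "x \<in> perms n" and p: "p + 1 < n" and "contracted_at up x p"
  shows "pi_up up n (inversions (swap_at x p)) = pi_up up n (inversions x)"
proof -
  obtain q c where q: "q < n" "x ! q = c" "x ! p < c" "c < x ! (p + 1)"
    "q < p \<and> up c \<or> p + 1 < q \<and> \<not> up c"
    using assms(3) length_perms[OF x] by (auto elim: contracted_atE)
  have bounds: "1 \<le> x ! p" "x ! (p + 1) \<le> n"
    using perms_nth_range[OF x] p by auto
  have "(x ! p, x ! (p + 1)) \<in> pi_up up n (inversions x)"
  proof (cases "up c")
    case True
    then have "(x ! p, c) \<in> inversions x"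
      using perms_inversion[OF x, of q p] q p by auto
    then show ?thesis
      using pi_up.up_right[OF pi_up.base] True q bounds by blast
  next
    case False
    then have "(c, x ! (p + 1)) \<in> inversions x"
      using perms_inversion[OF x, of "p + 1" q] q by auto
    then show ?thesis
      using pi_up.down_left[OF pi_up.base] False q bounds by blast
  qed
  then show ?thesis
    using inversions_swap_at_ascent[OF x p] q pi_up_insert by simp
qed

lemma cambrian_steps_perms:
  "(x, y) \<in> (cambrian_step n up)\<^sup>* \<Longrightarrow> x \<in> perms n \<longleftrightarrow> y \<in> perms n"
  by (induction rule: rtrancl_induct) (auto elim!: cambrian_stepE intro: swap_at_in_perms)

lemma cambrian_steps_pi_down:
  assumes "(x, y) \<in> (cambrian_step n up)\<^sup>*"
  shows "pi_down up (inversions y) = pi_down up (inversions x)"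
  using assms
proof (induction rule: rtrancl_induct)
  case (step y z)
  then obtain p where "y \<in> perms n" "p + 1 < n" "contracted_at up y p" "z = swap_at y p"
    by (auto elim: cambrian_stepE)
  then show ?case
    using step.IH pi_down_swap_contracted by metis
qed simp

lemma cambrian_steps_pi_up:
  assumes "(x, y) \<in> (cambrian_step n up)\<^sup>*"
  shows "pi_up up n (inversions y) = pi_up up n (inversions x)"
  using assms
proof (induction rule: rtrancl_induct)
  case (step y z)
  then obtain p where "y \<in> perms n" "p + 1 < n" "contracted_at up y p" "z = swap_at y p"
    by (auto elim: cambrian_stepE)
  then show ?case
    using step.IH pi_up_swap_contracted by metis
qed simp

lemma cambrian_step_inversions:
  assumes "(x, y) \<in> cambrian_step n up"
  shows "inversions x \<subset> inversions y" "inversions y \<subseteq> {1..n} \<times> {1..n}"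
proof -
  obtain p where p: "x \<in> perms n" "p + 1 < n" "contracted_at up x p" "y = swap_at x p"
    using assms by (auto elim: cambrian_stepE)
  then have asc: "x ! p < x ! (p + 1)"
    by (auto elim: contracted_atE)
  then show "inversions x \<subset> inversions y"
    using p inversions_swap_at_ascent perms_not_inversion[OF p(1), of p "p + 1"] by auto
  show "inversions y \<subseteq> {1..n} \<times> {1..n}"
    using p perms_inversions_subset swap_at_in_perms by blast
qed

lemma wf_cambrian_step: "wf (cambrian_step n up)"
proof (rule wf_subset[OF wf_inv_image[OF wf_finite_psubset, of inversions]])
  show "cambrian_step n up \<subseteq> inv_image finite_psubset inversions"
    using cambrian_step_inversions(1) finite_inversions by (auto simp: finite_psubset_def)
qed

lemma wf_converse_cambrian_step: "wf ((cambrian_step n up)\<inverse>)"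
proof (rule wf_bounded_set[where ub = "\<lambda>_. {1..n} \<times> {1..n}" and f = inversions])
  fix x y assume "(y, x) \<in> (cambrian_step n up)\<inverse>"
  then show "finite ({1..n} \<times> {1..n}) \<and> {1..n} \<times> {1..n} \<subseteq> {1..n} \<times> {1..n} \<and>
      inversions y \<subseteq> {1..n} \<times> {1..n} \<and> inversions x \<subset> inversions y"
    using cambrian_step_inversions[of x y n up] by simp
qed

lemma cambrian_step_into:
  assumes x: "x \<in> perms n" and p: "p + 1 < n" and q: "q < n"
    and "x ! (p + 1) < x ! q" "x ! q < x ! p" "q < p \<and> up (x ! q) \<or> p + 1 < q \<and> \<not> up (x ! q)"
  shows "(swap_at x p, x) \<in> cambrian_step n up"
proof -
  have "contracted_at up (swap_at x p) p"
    by (rule contracted_atI[where q = q and c = "x ! q"]) (use assms length_perms[OF x] in \<open>auto simp: nth_swap_at\<close>)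
  then show ?thesis
    using cambrian_stepI[OF swap_at_in_perms[OF x p] p] swap_at_swap_at[of p x] p length_perms[OF x]
    by simp
qed

lemma avoiders_subset_perms: "avoiders n up \<subseteq> perms n"
  unfolding avoiders_def by blast

lemma avoider_if_no_step_into:
  assumes x: "x \<in> perms n" and no_step: "\<And>u. (u, x) \<notin> cambrian_step n up"
  shows "x \<in> avoiders n up"
proof -
  have len: "length x = n"
    using length_perms[OF x] .
  have "\<not> contains_bar231 up x"
  proof
    assume "contains_bar231 up x"
    then obtain i j k where ijk: "i < j" "j < k" "k < n" "x ! k < x ! i" "x ! i < x ! j" "up (x ! i)"
      unfolding contains_bar231_def len by blast
    obtain p where p: "j \<le> p" "p < k" "x ! i < x ! p" "\<not> x ! i < x ! (p + 1)"
      using nat_predicate_switch[of j k "\<lambda>m. x ! i < x ! m"] ijk by auto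
    have "x ! (p + 1) \<noteq> x ! i"
      using perms_nth_eq_iff[OF x] ijk p by simp
    then show False
      using cambrian_step_into[OF x, where p = p and q = i and up = up] no_step ijk p by simp
  qed
  moreover have "\<not> contains_312under up x"
  proof
    assume "contains_312under up x"
    then obtain i j k where ijk: "i < j" "j < k" "k < n" "x ! j < x ! k" "x ! k < x ! i" "\<not> up (x ! k)"
      unfolding contains_312under_def len by blast
    obtain p where p: "i \<le> p" "p < j" "x ! k < x ! p" "\<not> x ! k < x ! (p + 1)"
      using nat_predicate_switch[of i j "\<lambda>m. x ! k < x ! m"] ijk by auto
    have "x ! (p + 1) \<noteq> x ! k"
      using perms_nth_eq_iff[OF x] ijk p by simp
    then show False
      using cambrian_step_into[OF x, where p = p and q = k and up = up] no_step ijk p by simp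
  qed
  ultimately show ?thesis
    using x unfolding avoiders_def by simp
qed

lemma pi_down_avoider:
  assumes "x \<in> avoiders n up"
  shows "pi_down up (inversions x) = inversions x"
proof (rule pi_down_eq_self)
  have x: "x \<in> perms n" and no231: "\<not> contains_bar231 up x" and no312: "\<not> contains_312under up x"
    using assms unfolding avoiders_def by auto
  fix a b c assume ab: "(a, b) \<in> inversions x" and c: "a < c" "c < b"
  obtain k j where kj: "k < n" "j < n" "a = x ! k" "b = x ! j" "j < k"
    using ab length_perms[OF x] by (auto elim: inversionsE)
  obtain i where i: "i < n" "x ! i = c"
    using perms_position[OF x, of c] perms_nth_range[OF x kj(1)] perms_nth_range[OF x kj(2)] kj c
    by (metis le_trans less_imp_le)
  have "i \<noteq> j" "i \<noteq> k"
    using i kj c by auto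
  show "(c, b) \<in> inversions x" if "up c"
  proof -
    have "\<not> i < j"
      using no231 that i kj c length_perms[OF x] unfolding contains_bar231_def by fastforce
    then show ?thesis
      using perms_inversion[OF x, of j i] \<open>i \<noteq> j\<close> i kj c by simp
  qed
  show "(a, c) \<in> inversions x" if "\<not> up c"
  proof -
    have "\<not> k < i"
      using no312 that i kj c length_perms[OF x] unfolding contains_312under_def by fastforce
    then show ?thesis
      using perms_inversion[OF x, of i k] \<open>i \<noteq> k\<close> i kj c by simp
  qed
qed

lemma inversions_up_closed_if_no_step_from:
  assumes x: "x \<in> perms n" and no_step: "\<And>y. (x, y) \<notin> cambrian_step n up"
    and ac: "(a, c) \<in> inversions x" "a < c" "c < b" "b \<le> n" "up c"
  shows "(a, b) \<in> inversions x"
proof (rule ccontr)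
  assume nab: "(a, b) \<notin> inversions x"
  obtain j i where ji: "j < n" "i < n" "a = x ! j" "c = x ! i" "i < j"
    using ac(1) length_perms[OF x] by (auto elim: inversionsE)
  obtain k where k: "k < n" "x ! k = b"
    using perms_position[OF x, of b] ac by auto
  have "k \<noteq> j" "\<not> k < j"
    using perms_inversion[OF x, of k j] nab ji k ac by auto
  then obtain p where p: "j \<le> p" "p < k" "x ! p < c" "\<not> x ! (p + 1) < c"
    using nat_predicate_switch[of j k "\<lambda>m. x ! m < c"] ji k ac by auto
  moreover have "x ! (p + 1) \<noteq> c"
    using perms_nth_eq_iff[OF x, of "p + 1" i] ji k p by simp
  ultimately have "contracted_at up x p"
    using ji k ac length_perms[OF x] by (intro contracted_atI[where q = i and c = c]) auto
  then show False
    using no_step cambrian_stepI[OF x, of p up] p k by simp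
qed

lemma inversions_down_closed_if_no_step_from:
  assumes x: "x \<in> perms n" and no_step: "\<And>y. (x, y) \<notin> cambrian_step n up"
    and cb: "(c, b) \<in> inversions x" "a < c" "c < b" "1 \<le> a" "\<not> up c"
  shows "(a, b) \<in> inversions x"
proof (rule ccontr)
  assume nab: "(a, b) \<notin> inversions x"
  obtain k j where kj: "k < n" "j < n" "c = x ! k" "b = x ! j" "j < k"
    using cb(1) length_perms[OF x] by (auto elim: inversionsE)
  obtain i where i: "i < n" "x ! i = a"
    using perms_position[OF x, of a] perms_nth_range[OF x kj(1)] cb kj by auto
  have "i \<noteq> j" "\<not> j < i"
    using perms_inversion[OF x, of j i] nab i kj cb by auto
  then obtain p where p: "i \<le> p" "p < j" "x ! p < c" "\<not> x ! (p + 1) < c"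
    using nat_predicate_switch[of i j "\<lambda>m. x ! m < c"] i kj cb by auto
  moreover have "x ! (p + 1) \<noteq> c"
    using perms_nth_eq_iff[OF x, of "p + 1" k] kj p by simp
  ultimately have "contracted_at up x p"
    using kj cb length_perms[OF x] by (intro contracted_atI[where q = k and c = c]) auto
  then show False
    using no_step cambrian_stepI[OF x, of p up] p kj by simp
qed

lemma pi_up_if_no_step_from:
  assumes "x \<in> perms n" "\<And>y. (x, y) \<notin> cambrian_step n up"
  shows "pi_up up n (inversions x) = inversions x"
  using inversions_up_closed_if_no_step_from[OF assms] inversions_down_closed_if_no_step_from[OF assms]
  by (rule pi_up_eq_self)

lemma exists_avoider_below:
  assumes x: "x \<in> perms n"
  obtains b where "b \<in> avoiders n up" "(b, x) \<in> (cambrian_step n up)\<^sup>*"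
proof -
  obtain b where steps: "(x, b) \<in> ((cambrian_step n up)\<inverse>)\<^sup>*"
    and min: "\<And>u. (b, u) \<notin> (cambrian_step n up)\<inverse>"
    using wf_converse_rtrancl_maximal[of "(cambrian_step n up)\<inverse>"] wf_cambrian_step by auto
  have "(b, x) \<in> (cambrian_step n up)\<^sup>*"
    using steps by (simp add: rtrancl_converse)
  moreover have "b \<in> perms n"
    using cambrian_steps_perms[OF calculation] x by simp
  ultimately show thesis
    using that avoider_if_no_step_into min by blast
qed

lemma exists_pi_up_closed_above:
  assumes x: "x \<in> perms n"
  obtains t where "t \<in> perms n" "(x, t) \<in> (cambrian_step n up)\<^sup>*"
    "pi_up up n (inversions t) = inversions t"
proof -
  obtain t where steps: "(x, t) \<in> (cambrian_step n up)\<^sup>*" and max: "\<And>y. (t, y) \<notin> cambrian_step n up"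
    using wf_converse_rtrancl_maximal[OF wf_converse_cambrian_step] by blast
  have "t \<in> perms n"
    using cambrian_steps_perms[OF steps] x by simp
  then show thesis
    using that steps pi_up_if_no_step_from max by blast
qed

lemma avoiders_eq_if_pi_down_eq:
  assumes "b \<in> avoiders n up" "b' \<in> avoiders n up"
    and "pi_down up (inversions b) = pi_down up (inversions b')"
  shows "b = b'"
proof (rule perms_inversions_inject)
  show "b \<in> perms n" "b' \<in> perms n"
    using assms avoiders_subset_perms by auto
  show "inversions b = inversions b'"
    using assms pi_down_avoider by metis
qed

lemma pi_down_realized:
  assumes "x \<in> perms n"
  obtains b where "b \<in> avoiders n up" "inversions b = pi_down up (inversions x)"
proof -
  obtain b where "b \<in> avoiders n up" "(b, x) \<in> (cambrian_step n up)\<^sup>*"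
    using exists_avoider_below[OF assms] .
  then show thesis
    using that pi_down_avoider cambrian_steps_pi_down by metis
qed

lemma pi_up_realized:
  assumes "x \<in> perms n"
  obtains t where "t \<in> perms n" "inversions t = pi_up up n (inversions x)"
proof -
  obtain t where "t \<in> perms n" "(x, t) \<in> (cambrian_step n up)\<^sup>*"
    "pi_up up n (inversions t) = inversions t"
    using exists_pi_up_closed_above[OF assms] .
  then show thesis
    using that cambrian_steps_pi_up by metis
qed

lemma pi_down_eq_iff_pi_up_eq:
  assumes x: "x \<in> perms n" and y: "y \<in> perms n"
  shows "pi_down up (inversions x) = pi_down up (inversions y) \<longleftrightarrow>
    pi_up up n (inversions x) = pi_up up n (inversions y)"
proof -
  obtain b_x b_y where b_x: "b_x \<in> avoiders n up" "(b_x, x) \<in> (cambrian_step n up)\<^sup>*"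
    and b_y: "b_y \<in> avoiders n up" "(b_y, y) \<in> (cambrian_step n up)\<^sup>*"
    using exists_avoider_below x y by metis
  obtain tx ty where tx: "tx \<in> perms n" "(x, tx) \<in> (cambrian_step n up)\<^sup>*"
      "pi_up up n (inversions tx) = inversions tx"
    and ty: "ty \<in> perms n" "(y, ty) \<in> (cambrian_step n up)\<^sup>*"
      "pi_up up n (inversions ty) = inversions ty"
    using exists_pi_up_closed_above x y by metis
  show ?thesis
  proof
    assume "pi_down up (inversions x) = pi_down up (inversions y)"
    then have "b_x = b_y"
      using b_x b_y avoiders_eq_if_pi_down_eq cambrian_steps_pi_down by metis
    then show "pi_up up n (inversions x) = pi_up up n (inversions y)"
      using b_x b_y cambrian_steps_pi_up by metis
  next
    assume "pi_up up n (inversions x) = pi_up up n (inversions y)"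
    then have "inversions tx = inversions ty"
      using tx ty cambrian_steps_pi_up by metis
    then have "tx = ty"
      using tx ty perms_inversions_inject by blast
    then show "pi_down up (inversions x) = pi_down up (inversions y)"
      using tx ty cambrian_steps_pi_down by metis
  qed
qed

section \<open>Lattice congruences of the weak order\<close>

lemma lattice_cong_in_perms: "lattice_cong n R \<Longrightarrow> (x, y) \<in> R \<Longrightarrow> x \<in> perms n \<and> y \<in> perms n"
  unfolding lattice_cong_def equiv_def refl_on_def by blast

lemma lattice_cong_refl: "lattice_cong n R \<Longrightarrow> x \<in> perms n \<Longrightarrow> (x, x) \<in> R"
  unfolding lattice_cong_def equiv_def refl_on_def by blast

lemma lattice_cong_sym: "lattice_cong n R \<Longrightarrow> (x, y) \<in> R \<Longrightarrow> (y, x) \<in> R"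
  unfolding lattice_cong_def equiv_def by (blast dest: symD)

lemma lattice_cong_trans: "lattice_cong n R \<Longrightarrow> (x, y) \<in> R \<Longrightarrow> (y, z) \<in> R \<Longrightarrow> (x, z) \<in> R"
  unfolding lattice_cong_def equiv_def by (blast dest: transD)

lemma lattice_cong_meet:
  "lattice_cong n R \<Longrightarrow> (x, y) \<in> R \<Longrightarrow> z \<in> perms n \<Longrightarrow> is_meet n x z m \<Longrightarrow> is_meet n y z m' \<Longrightarrow>
     (m, m') \<in> R"
  unfolding lattice_cong_def by blast

lemma lattice_cong_join:
  "lattice_cong n R \<Longrightarrow> (x, y) \<in> R \<Longrightarrow> z \<in> perms n \<Longrightarrow> is_join n x z m \<Longrightarrow> is_join n y z m' \<Longrightarrow>
     (m, m') \<in> R"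
  unfolding lattice_cong_def by blast

lemma is_meetI:
  "m \<in> perms n \<Longrightarrow> inversions m \<subseteq> inversions x \<Longrightarrow> inversions m \<subseteq> inversions y \<Longrightarrow>
   (\<And>w. w \<in> perms n \<Longrightarrow> inversions w \<subseteq> inversions x \<Longrightarrow> inversions w \<subseteq> inversions y \<Longrightarrow>
      inversions w \<subseteq> inversions m) \<Longrightarrow>
   is_meet n x y m"
  unfolding is_meet_def weak_le_def by auto

lemma is_joinI:
  "m \<in> perms n \<Longrightarrow> inversions x \<subseteq> inversions m \<Longrightarrow> inversions y \<subseteq> inversions m \<Longrightarrow>
   (\<And>w. w \<in> perms n \<Longrightarrow> inversions x \<subseteq> inversions w \<Longrightarrow> inversions y \<subseteq> inversions w \<Longrightarrow>
      inversions m \<subseteq> inversions w) \<Longrightarrow>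
   is_join n x y m"
  unfolding is_join_def weak_le_def by auto

lemma is_meet_left: "x \<in> perms n \<Longrightarrow> inversions x \<subseteq> inversions y \<Longrightarrow> is_meet n x y x"
  by (rule is_meetI) auto

lemma is_meet_right: "y \<in> perms n \<Longrightarrow> inversions y \<subseteq> inversions x \<Longrightarrow> is_meet n x y y"
  by (rule is_meetI) auto

lemma is_join_right: "y \<in> perms n \<Longrightarrow> inversions x \<subseteq> inversions y \<Longrightarrow> is_join n x y y"
  by (rule is_joinI) auto

lemma lattice_cong_convex:
  assumes R: "lattice_cong n R" and uw: "(u, w) \<in> R" and v: "v \<in> perms n"
    and "inversions u \<subseteq> inversions v" "inversions v \<subseteq> inversions w"
  shows "(u, v) \<in> R"
proof -
  have "is_meet n w v v" "is_meet n u v u"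
    using assms lattice_cong_in_perms[OF R uw] by (auto intro: is_meet_left is_meet_right)
  then have "(v, u) \<in> R"
    using lattice_cong_meet[OF R lattice_cong_sym[OF R uw] v] by blast
  then show ?thesis
    using lattice_cong_sym[OF R] by blast
qed

lemma lattice_cong_swap_by_join:
  assumes R: "lattice_cong n R" and cong: "(u, u') \<in> R" and x: "x \<in> perms n" and p: "p + 1 < n"
    and asc: "x ! p < x ! (p + 1)" and "inversions u \<subseteq> inversions x"
    and "inversions u' = insert (x ! p, x ! (p + 1)) (inversions u)"
  shows "(x, swap_at x p) \<in> R"
proof -
  have "is_join n u x x"
    by (rule is_join_right[OF x]) fact
  moreover have "is_join n u' x (swap_at x p)"
    by (rule is_joinI[OF swap_at_in_perms[OF x p]])
      (use inversions_swap_at_ascent[OF x p asc] assms in auto)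
  ultimately show ?thesis
    using lattice_cong_join[OF R cong x] by blast
qed

lemma lattice_cong_square:
  assumes R: "lattice_cong n R" and x: "x \<in> perms n" and p: "p + 1 < n" and asc: "x ! p < x ! (p + 1)"
    and r: "r + 1 < n" and far: "r + 1 < p \<or> p + 1 < r"
    and cong: "(swap_at x r, swap_at (swap_at x r) p) \<in> R"
  shows "(x, swap_at x p) \<in> R"
proof -
  define y where "y = swap_at x r"
  have len: "length x = n"
    using length_perms[OF x] .
  have y: "y \<in> perms n"
    unfolding y_def using swap_at_in_perms[OF x r] .
  have y_pair: "y ! p = x ! p" "y ! (p + 1) = x ! (p + 1)"
    unfolding y_def using far by auto
  have X: "swap_at x p \<in> perms n"
    using swap_at_in_perms[OF x p] .
  have IX: "inversions (swap_at x p) = insert (x ! p, x ! (p + 1)) (inversions x)"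
    using inversions_swap_at_ascent[OF x p asc] .
  have IY: "inversions (swap_at y p) = insert (x ! p, x ! (p + 1)) (inversions y)"
    using inversions_swap_at_ascent[OF y p] y_pair asc by simp
  have distinct_pairs: "(x ! r, x ! (r + 1)) \<noteq> (x ! p, x ! (p + 1))"
    "(x ! (r + 1), x ! r) \<noteq> (x ! p, x ! (p + 1))"
    using perms_nth_eq_iff[OF x] p r far by auto
  show ?thesis
  proof (cases "x ! r < x ! (r + 1)")
    case True
    have Iy: "inversions y = insert (x ! r, x ! (r + 1)) (inversions x)"
      unfolding y_def using inversions_swap_at_ascent[OF x r True] .
    have "is_meet n (swap_at y p) (swap_at x p) (swap_at x p)"
      by (rule is_meet_right[OF X]) (use IX IY Iy in auto)
    moreover have "is_meet n y (swap_at x p) x"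
      by (rule is_meetI[OF x]) (use IX Iy distinct_pairs in auto)
    ultimately have "(swap_at x p, x) \<in> R"
      using lattice_cong_meet[OF R lattice_cong_sym[OF R cong[folded y_def]] X] by blast
    then show ?thesis
      using lattice_cong_sym[OF R] by blast
  next
    case False
    then have desc: "x ! (r + 1) < x ! r"
      using perms_nth_eq_iff[OF x, of r "r + 1"] r by (simp add: linorder_neq_iff)
    have Iy: "inversions y = inversions x - {(x ! (r + 1), x ! r)}"
      unfolding y_def using inversions_swap_at_descent[OF x r desc] .
    have "is_join n y x x"
      by (rule is_join_right[OF x]) (use Iy in auto)
    moreover have "is_join n (swap_at y p) x (swap_at x p)"
      by (rule is_joinI[OF X]) (use IX IY Iy in auto)
    ultimately show ?thesis
      using lattice_cong_join[OF R cong[folded y_def] x] by blast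
  qed
qed

text \<open>The two halves of the hexagon formed by three values a < d < b in adjacent positions;
  r and s are the inversions (a, d) and (d, b) in the order in which they are removed and added.\<close>

lemma lattice_cong_hexagon_join:
  assumes R: "lattice_cong n R" and x: "x \<in> perms n" and X: "X \<in> perms n" and T: "T \<in> perms n"
    and rs: "r = (a, d) \<and> s = (d, b) \<or> r = (d, b) \<and> s = (a, d)" and r: "r \<in> inversions x"
    and Ih: "inversions h = inversions x - {r}" and Ig: "inversions g = insert s (inversions h)"
    and IX: "inversions X = insert (a, b) (inversions x)" and IT: "inversions T = insert s (inversions X)"
    and cong: "(h, g) \<in> R"
  shows "(x, X) \<in> R"
proof -
  have "is_join n h x x"
    by (rule is_join_right[OF x]) (use Ih in auto)
  moreover have "is_join n g x T"
  proof (rule is_joinI[OF T])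
    show "inversions g \<subseteq> inversions T" "inversions x \<subseteq> inversions T"
      using Ig Ih IX IT by auto
    fix w assume w: "w \<in> perms n" "inversions g \<subseteq> inversions w" "inversions x \<subseteq> inversions w"
    then have "(a, b) \<in> inversions w"
      using rs r Ig perms_inversions_trans[OF w(1)] by blast
    then show "inversions T \<subseteq> inversions w"
      using IT IX Ig w by auto
  qed
  ultimately have "(x, T) \<in> R"
    using lattice_cong_join[OF R cong x] by blast
  then show ?thesis
    by (rule lattice_cong_convex[OF R _ X]) (use IX IT in auto)
qed

lemma lattice_cong_hexagon_meet:
  assumes R: "lattice_cong n R" and x: "x \<in> perms n" and X: "X \<in> perms n" and h: "h \<in> perms n"
    and rs: "r = (a, d) \<and> s = (d, b) \<or> r = (d, b) \<and> s = (a, d)" and "a < d" "d < b"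
    and r: "r \<in> inversions x" and s: "s \<notin> inversions x"
    and Ih: "inversions h = inversions x - {r}"
    and It: "inversions t = insert (a, b) (insert s (inversions h))"
    and IT: "inversions T = insert r (inversions t)"
    and IX: "inversions X = insert (a, b) (inversions x)"
    and cong: "(t, T) \<in> R"
  shows "(x, X) \<in> R"
proof -
  have "is_meet n T X X"
    by (rule is_meet_right[OF X]) (use IX IT It Ih r in auto)
  moreover have "is_meet n t X h"
  proof (rule is_meetI[OF h])
    show "inversions h \<subseteq> inversions t" "inversions h \<subseteq> inversions X"
      using It IX Ih by auto
    fix w assume w: "w \<in> perms n" "inversions w \<subseteq> inversions t" "inversions w \<subseteq> inversions X"
    have "r \<notin> inversions t" "s \<notin> inversions X"
      using It Ih IX s rs \<open>a < d\<close> \<open>d < b\<close> by auto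
    then have "(a, b) \<notin> inversions w"
      using perms_inversion_split[OF w(1), of a b d] rs w(2,3) \<open>a < d\<close> \<open>d < b\<close> by blast
    then show "inversions w \<subseteq> inversions h"
      using w It IX Ih s by auto
  qed
  ultimately have "(X, h) \<in> R"
    using lattice_cong_meet[OF R lattice_cong_sym[OF R cong] X] by blast
  then have "(h, X) \<in> R"
    by (rule lattice_cong_sym[OF R])
  moreover have "(h, x) \<in> R"
    by (rule lattice_cong_convex[OF R \<open>(h, X) \<in> R\<close> x]) (use Ih IX in auto)
  ultimately show ?thesis
    using lattice_cong_sym[OF R] lattice_cong_trans[OF R] by blast
qed

lemma lattice_cong_hexagon_left_low:
  assumes R: "lattice_cong n R" and y: "y \<in> perms n" and p: "p + 2 < n"
    and vals: "y ! p = d" "y ! (p + 1) = a" "y ! (p + 2) = b" and ad: "a < d" and db: "d < b"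
    and cong: "(swap_at y p, swap_at (swap_at y p) (p + 1)) \<in> R"
  shows "(y, swap_at y (p + 1)) \<in> R"
proof -
  define h where "h = swap_at y p"
  define X where "X = swap_at y (p + 1)"
  have p1: "p + 1 < n" "p + 1 + 1 < n" and len: "length y = n"
    using p length_perms[OF y] by auto
  have h: "h \<in> perms n" and X: "X \<in> perms n"
    unfolding h_def X_def using swap_at_in_perms[OF y] p1 by auto
  show ?thesis
    unfolding X_def[symmetric]
  proof (rule lattice_cong_hexagon_join[OF R y X swap_at_in_perms[OF X p1(1)], where a = a and d = d and b = b and r = "(a, d)" and s = "(d, b)"])
    show "(a, d) \<in> inversions y"
      using perms_inversion[OF y, of p "p + 1"] p1 vals ad by simp
    show "inversions h = inversions y - {(a, d)}"
      unfolding h_def using inversions_swap_at_descent[OF y p1(1)] vals ad by simp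
    show "inversions (swap_at h (p + 1)) = insert (d, b) (inversions h)"
      using inversions_swap_at_ascent[OF h p1(2)] vals db p1 len unfolding h_def by simp
    show "inversions X = insert (a, b) (inversions y)"
      unfolding X_def using inversions_swap_at_ascent[OF y p1(2)] vals ad db by simp
    show "inversions (swap_at X p) = insert (d, b) (inversions X)"
      using inversions_swap_at_ascent[OF X p1(1)] vals db p1 len unfolding X_def by simp
  qed (use cong in \<open>simp_all add: h_def\<close>)
qed

lemma lattice_cong_hexagon_right_low:
  assumes R: "lattice_cong n R" and y: "y \<in> perms n" and p: "p + 2 < n"
    and vals: "y ! p = a" "y ! (p + 1) = b" "y ! (p + 2) = d" and ad: "a < d" and db: "d < b"
    and cong: "(swap_at y (p + 1), swap_at (swap_at y (p + 1)) p) \<in> R"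
  shows "(y, swap_at y p) \<in> R"
proof -
  define h where "h = swap_at y (p + 1)"
  define X where "X = swap_at y p"
  have p1: "p + 1 < n" "p + 1 + 1 < n" and len: "length y = n"
    using p length_perms[OF y] by auto
  have h: "h \<in> perms n" and X: "X \<in> perms n"
    unfolding h_def X_def using swap_at_in_perms[OF y] p1 by auto
  show ?thesis
    unfolding X_def[symmetric]
  proof (rule lattice_cong_hexagon_join[OF R y X swap_at_in_perms[OF X p1(2)],
        where a = a and d = d and b = b and r = "(d, b)" and s = "(a, d)"])
    show "(d, b) \<in> inversions y"
      using perms_inversion[OF y, of "p + 1" "p + 2"] p vals db by simp
    show "inversions h = inversions y - {(d, b)}"
      unfolding h_def using inversions_swap_at_descent[OF y p1(2)] vals db by simp
    show "inversions (swap_at h p) = insert (a, d) (inversions h)"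
      using inversions_swap_at_ascent[OF h p1(1)] vals ad p1 len unfolding h_def by simp
    show "inversions X = insert (a, b) (inversions y)"
      unfolding X_def using inversions_swap_at_ascent[OF y p1(1)] vals ad db by simp
    show "inversions (swap_at X (p + 1)) = insert (a, d) (inversions X)"
      using inversions_swap_at_ascent[OF X p1(2)] vals ad p1 len unfolding X_def by simp
  qed (use cong in \<open>simp_all add: h_def\<close>)
qed

lemma lattice_cong_hexagon_left_high:
  assumes R: "lattice_cong n R" and y: "y \<in> perms n" and p: "p + 2 < n"
    and vals: "y ! p = d" "y ! (p + 1) = a" "y ! (p + 2) = b" and ad: "a < d" and db: "d < b"
    and cong: "(swap_at (swap_at (swap_at y p) (p + 1)) p,
      swap_at (swap_at (swap_at (swap_at y p) (p + 1)) p) (p + 1)) \<in> R"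
  shows "(y, swap_at y (p + 1)) \<in> R"
proof -
  define h where "h = swap_at y p"
  define g where "g = swap_at h (p + 1)"
  define t where "t = swap_at g p"
  define X where "X = swap_at y (p + 1)"
  have p1: "p + 1 < n" "p + 1 + 1 < n" and len: "length y = n"
    using p length_perms[OF y] by auto
  have h: "h \<in> perms n" and g: "g \<in> perms n" and t: "t \<in> perms n" and X: "X \<in> perms n"
    unfolding t_def g_def h_def X_def using swap_at_in_perms p1 y by auto
  have Ig: "inversions g = insert (d, b) (inversions h)"
    using inversions_swap_at_ascent[OF h p1(2)] vals db p1 len unfolding g_def h_def by simp
  show ?thesis
    unfolding X_def[symmetric]
  proof (rule lattice_cong_hexagon_meet[OF R y X h,
        where a = a and d = d and b = b and r = "(a, d)" and s = "(d, b)" and t = t])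
    show "(a, d) \<in> inversions y"
      using perms_inversion[OF y, of p "p + 1"] p1 vals ad by simp
    show "(d, b) \<notin> inversions y"
      using perms_not_inversion[OF y, of p "p + 2"] p vals db by simp
    show "inversions h = inversions y - {(a, d)}"
      unfolding h_def using inversions_swap_at_descent[OF y p1(1)] vals ad by simp
    show "inversions t = insert (a, b) (insert (d, b) (inversions h))"
      using inversions_swap_at_ascent[OF g p1(1)] Ig vals ad db p1 len
      unfolding t_def g_def h_def by simp
    show "inversions (swap_at t (p + 1)) = insert (a, d) (inversions t)"
      using inversions_swap_at_ascent[OF t p1(2)] vals ad p1 len
      unfolding t_def g_def h_def by simp
    show "inversions X = insert (a, b) (inversions y)"
      unfolding X_def using inversions_swap_at_ascent[OF y p1(2)] vals ad db by simp
  qed (use cong ad db in \<open>simp_all add: t_def g_def h_def\<close>)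
qed

lemma lattice_cong_hexagon_right_high:
  assumes R: "lattice_cong n R" and y: "y \<in> perms n" and p: "p + 2 < n"
    and vals: "y ! p = a" "y ! (p + 1) = b" "y ! (p + 2) = d" and ad: "a < d" and db: "d < b"
    and cong: "(swap_at (swap_at (swap_at y (p + 1)) p) (p + 1),
      swap_at (swap_at (swap_at (swap_at y (p + 1)) p) (p + 1)) p) \<in> R"
  shows "(y, swap_at y p) \<in> R"
proof -
  define h where "h = swap_at y (p + 1)"
  define g where "g = swap_at h p"
  define t where "t = swap_at g (p + 1)"
  define X where "X = swap_at y p"
  have p1: "p + 1 < n" "p + 1 + 1 < n" and len: "length y = n"
    using p length_perms[OF y] by auto
  have h: "h \<in> perms n" and g: "g \<in> perms n" and t: "t \<in> perms n" and X: "X \<in> perms n"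
    unfolding t_def g_def h_def X_def using swap_at_in_perms p1 y by auto
  have Ig: "inversions g = insert (a, d) (inversions h)"
    using inversions_swap_at_ascent[OF h p1(1)] vals ad p1 len unfolding g_def h_def by simp
  show ?thesis
    unfolding X_def[symmetric]
  proof (rule lattice_cong_hexagon_meet[OF R y X h,
        where a = a and d = d and b = b and r = "(d, b)" and s = "(a, d)" and t = t])
    show "(d, b) \<in> inversions y"
      using perms_inversion[OF y, of "p + 1" "p + 2"] p vals db by simp
    show "(a, d) \<notin> inversions y"
      using perms_not_inversion[OF y, of p "p + 2"] p vals ad by simp
    show "inversions h = inversions y - {(d, b)}"
      unfolding h_def using inversions_swap_at_descent[OF y p1(2)] vals db by simp
    show "inversions t = insert (a, b) (insert (a, d) (inversions h))"
      using inversions_swap_at_ascent[OF g p1(2)] Ig vals ad db p1 len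
      unfolding t_def g_def h_def by simp
    show "inversions (swap_at t p) = insert (d, b) (inversions t)"
      using inversions_swap_at_ascent[OF t p1(1)] vals db p1 len
      unfolding t_def g_def h_def by simp
    show "inversions X = insert (a, b) (inversions y)"
      unfolding X_def using inversions_swap_at_ascent[OF y p1(1)] vals ad db by simp
  qed (use cong ad db in \<open>simp_all add: t_def g_def h_def\<close>)
qed

section \<open>The kernel of the bottom projection\<close>

definition pi_down_kernel :: "nat \<Rightarrow> (nat \<Rightarrow> bool) \<Rightarrow> (nat list \<times> nat list) set" where
  "pi_down_kernel n up = {(x, y). x \<in> perms n \<and> y \<in> perms n \<and>
     pi_down up (inversions x) = pi_down up (inversions y)}"

lemma pi_down_meet_mono:
  assumes eq: "pi_down up (inversions x) = pi_down up (inversions y)"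
    and m: "is_meet n x z m" and m': "is_meet n y z m'"
  shows "pi_down up (inversions m') \<subseteq> pi_down up (inversions m)"
proof -
  have m'_le: "inversions m' \<subseteq> inversions y" "inversions m' \<subseteq> inversions z" "m' \<in> perms n"
    using m' unfolding is_meet_def weak_le_def by auto
  obtain b where b: "b \<in> avoiders n up" "inversions b = pi_down up (inversions m')"
    using pi_down_realized[OF m'_le(3)] .
  have "inversions b \<subseteq> pi_down up (inversions x)"
    using b(2) pi_down_mono[OF m'_le(1)] eq by simp
  then have "inversions b \<subseteq> inversions x" "inversions b \<subseteq> inversions z"
    using b(2) pi_down_subset m'_le(2) by blast+
  then have "inversions b \<subseteq> inversions m"
    using m b(1) avoiders_subset_perms unfolding is_meet_def weak_le_def by blast
  then show ?thesis
    using pi_down_mono b(2) pi_down_idem by metis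
qed

lemma pi_up_join_mono:
  assumes x: "x \<in> perms n" and y: "y \<in> perms n"
    and eq: "pi_down up (inversions x) = pi_down up (inversions y)"
    and m: "is_join n x z m" and m': "is_join n y z m'"
  shows "pi_up up n (inversions m') \<subseteq> pi_up up n (inversions m)"
proof -
  have m_ge: "inversions x \<subseteq> inversions m" "inversions z \<subseteq> inversions m" "m \<in> perms n"
    using m unfolding is_join_def weak_le_def by auto
  obtain t where t: "t \<in> perms n" "inversions t = pi_up up n (inversions m)"
    using pi_up_realized[OF m_ge(3)] .
  have "inversions y \<subseteq> pi_up up n (inversions x)"
    using pi_up_ext pi_down_eq_iff_pi_up_eq[OF x y] eq by blast
  then have "inversions y \<subseteq> inversions t" "inversions z \<subseteq> inversions t"
    using t(2) pi_up_mono[OF m_ge(1)] pi_up_ext m_ge(2) by blast+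
  then have "inversions m' \<subseteq> inversions t"
    using m' t(1) unfolding is_join_def weak_le_def by blast
  then show ?thesis
    using pi_up_mono t(2) pi_up_idem by metis
qed

lemma lattice_cong_pi_down_kernel: "lattice_cong n (pi_down_kernel n up)"
  unfolding lattice_cong_def
proof (intro conjI allI impI)
  show "equiv (perms n) (pi_down_kernel n up)"
    unfolding equiv_def refl_on_def sym_def trans_def pi_down_kernel_def by auto
next
  fix x y z m m'
  assume "(x, y) \<in> pi_down_kernel n up \<and> z \<in> perms n \<and> is_meet n x z m \<and> is_meet n y z m'"
  then show "(m, m') \<in> pi_down_kernel n up"
    using pi_down_meet_mono[of up x y n z m m'] pi_down_meet_mono[of up y x n z m' m]
    unfolding pi_down_kernel_def is_meet_def by auto
next
  fix x y z m m'
  assume "(x, y) \<in> pi_down_kernel n up \<and> z \<in> perms n \<and> is_join n x z m \<and> is_join n y z m'"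
  then show "(m, m') \<in> pi_down_kernel n up"
    using pi_up_join_mono[of x n y up z m m'] pi_up_join_mono[of y n x up z m' m]
      pi_down_eq_iff_pi_up_eq[of m n m' up]
    unfolding pi_down_kernel_def is_join_def by auto
qed

lemma cambrian_steps_in_pi_down_kernel:
  "(x, y) \<in> (cambrian_step n up)\<^sup>* \<Longrightarrow> x \<in> perms n \<Longrightarrow> (x, y) \<in> pi_down_kernel n up"
  using cambrian_steps_perms cambrian_steps_pi_down unfolding pi_down_kernel_def by fastforce

section \<open>Congruences containing the generating pairs\<close>

lemma upt_in_perms: "[1..<n + 1] \<in> perms n"
  unfolding perms_def by (simp del: upt_Suc add: atLeastLessThanSuc_atLeastAtMost)

lemma nth_stransp:
  "k < n \<Longrightarrow> stransp n j ! k = (if k + 1 = j then j + 1 else if k = j then j else k + 1)"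
  unfolding stransp_def by (simp del: upt_Suc add: nth_upt)

lemma length_stransp [simp]: "length (stransp n j) = n"
  unfolding stransp_def by simp

lemma stransp_eq_swap_at: "1 \<le> j \<Longrightarrow> j < n \<Longrightarrow> stransp n j = swap_at [1..<n + 1] (j - 1)"
  by (rule nth_equalityI) (auto simp del: upt_Suc simp: nth_stransp nth_swap_at nth_upt)

lemma stransp_in_perms: "1 \<le> j \<Longrightarrow> j < n \<Longrightarrow> stransp n j \<in> perms n"
  using stransp_eq_swap_at swap_at_in_perms[OF upt_in_perms] by simp

lemma inversions_stransp: "1 \<le> j \<Longrightarrow> j < n \<Longrightarrow> inversions (stransp n j) = {(j, j + 1)}"
  using stransp_eq_swap_at inversions_swap_at_ascent[OF upt_in_perms, of "j - 1" n]
    inversions_sorted[of "[1..<n + 1]"] by (simp del: upt_Suc add: nth_upt)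

lemma pmult_stransp_Suc:
  "1 \<le> a \<Longrightarrow> a + 2 \<le> n \<Longrightarrow> pmult (stransp n a) (stransp n (a + 1)) = swap_at (stransp n a) a"
proof (rule nth_equalityI)
  fix k assume "1 \<le> a" "a + 2 \<le> n" "k < length (pmult (stransp n a) (stransp n (a + 1)))"
  moreover have "stransp n (a + 1) ! k - 1 < n"
    using calculation by (auto simp: nth_stransp pmult_def)
  ultimately show "pmult (stransp n a) (stransp n (a + 1)) ! k = swap_at (stransp n a) a ! k"
    by (auto simp: nth_stransp nth_swap_at pmult_def)
qed (simp add: pmult_def)

lemma pmult_Suc_stransp:
  "1 \<le> a \<Longrightarrow> a + 2 \<le> n \<Longrightarrow>
     pmult (stransp n (a + 1)) (stransp n a) = swap_at (stransp n (a + 1)) (a - 1)"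
proof (rule nth_equalityI)
  fix k assume "1 \<le> a" "a + 2 \<le> n" "k < length (pmult (stransp n (a + 1)) (stransp n a))"
  moreover have "stransp n a ! k - 1 < n"
    using calculation by (auto simp: nth_stransp pmult_def)
  ultimately show "pmult (stransp n (a + 1)) (stransp n a) ! k = swap_at (stransp n (a + 1)) (a - 1) ! k"
    by (auto simp: nth_stransp nth_swap_at pmult_def)
qed (simp add: pmult_def)

lemma inversions_swap_at_stransp:
  "1 \<le> a \<Longrightarrow> a + 2 \<le> n \<Longrightarrow>
     inversions (swap_at (stransp n a) a) = insert (a, a + 2) (inversions (stransp n a))"
  using inversions_swap_at_ascent[OF stransp_in_perms, of a n a] by (simp add: nth_stransp)

lemma inversions_swap_at_Suc_stransp:
  "1 \<le> a \<Longrightarrow> a + 2 \<le> n \<Longrightarrow>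
     inversions (swap_at (stransp n (a + 1)) (a - 1)) = insert (a, a + 2) (inversions (stransp n (a + 1)))"
proof -
  assume a: "1 \<le> a" "a + 2 \<le> n"
  then have "stransp n (a + 1) ! (a - 1) = a" "stransp n (a + 1) ! (a - 1 + 1) = a + 2"
    by (simp_all add: nth_stransp)
  then show ?thesis
    using inversions_swap_at_ascent[OF stransp_in_perms, of "a + 1" n "a - 1"] a by simp
qed

lemma stransp_contracted:
  "1 \<le> a \<Longrightarrow> a + 2 \<le> n \<Longrightarrow> up (a + 1) \<Longrightarrow> contracted_at up (stransp n a) a"
  by (rule contracted_atI[where q = "a - 1" and c = "a + 1"]) (auto simp: nth_stransp)

lemma Suc_stransp_contracted:
  "1 \<le> a \<Longrightarrow> a + 2 \<le> n \<Longrightarrow> \<not> up (a + 1) \<Longrightarrow> contracted_at up (stransp n (a + 1)) (a - 1)"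
  by (rule contracted_atI[where q = "a + 1" and c = "a + 1"]) (auto simp: nth_stransp)

lemma orientation_edge_iff:
  assumes ori: "orientation n E" and upE: "\<forall>b. 2 \<le> b \<and> b \<le> n - 1 \<longrightarrow> (up b \<longleftrightarrow> E b (b - 1))"
    and a: "1 \<le> a" "a + 2 \<le> n"
  shows "E (a + 1) a \<longleftrightarrow> up (a + 1)" and "E a (a + 1) \<longleftrightarrow> \<not> up (a + 1)"
proof -
  show up_iff: "E (a + 1) a \<longleftrightarrow> up (a + 1)"
    using upE a by auto
  show "E a (a + 1) \<longleftrightarrow> \<not> up (a + 1)"
    using ori a up_iff unfolding orientation_def by auto
qed

lemma orientation_edgeE:
  assumes "orientation n E" "E i j"
  obtains a where "1 \<le> a" "a + 2 \<le> n" "i = a + 1 \<and> j = a \<or> i = a \<and> j = a + 1"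
proof -
  have bounds: "1 \<le> i" "i \<le> n - 1" "1 \<le> j" "j \<le> n - 1" and "j = i + 1 \<or> i = j + 1"
    using assms unfolding orientation_def by blast+
  then consider "j = i + 1" | "i = j + 1"
    by blast
  then show thesis
  proof cases
    case 1
    then show thesis
      using that[of i] bounds by simp
  next
    case 2
    then show thesis
      using that[of j] bounds by simp
  qed
qed

definition contracts_edges :: "nat \<Rightarrow> (nat \<Rightarrow> nat \<Rightarrow> bool) \<Rightarrow> (nat list \<times> nat list) set \<Rightarrow> bool" where
  "contracts_edges n E R \<longleftrightarrow> (\<forall>i j. E i j \<longrightarrow> (stransp n j, pmult (stransp n j) (stransp n i)) \<in> R)"

lemma edge_pair_cambrian_step:
  assumes ori: "orientation n E" and upE: "\<forall>b. 2 \<le> b \<and> b \<le> n - 1 \<longrightarrow> (up b \<longleftrightarrow> E b (b - 1))"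
    and "E i j"
  shows "(stransp n j, pmult (stransp n j) (stransp n i)) \<in> cambrian_step n up"
proof -
  obtain a where a: "1 \<le> a" "a + 2 \<le> n" and ij: "i = a + 1 \<and> j = a \<or> i = a \<and> j = a + 1"
    using orientation_edgeE[OF ori \<open>E i j\<close>] .
  then show ?thesis
  proof (elim disjE conjE)
    assume "i = a + 1" "j = a"
    then show ?thesis
      using cambrian_stepI[OF stransp_in_perms _ stransp_contracted] pmult_stransp_Suc
        orientation_edge_iff(1)[OF ori upE a] \<open>E i j\<close> a by simp
  next
    assume "i = a" "j = a + 1"
    then show ?thesis
      using cambrian_stepI[OF stransp_in_perms _ Suc_stransp_contracted] pmult_Suc_stransp
        orientation_edge_iff(2)[OF ori upE a] \<open>E i j\<close> a by simp
  qed
qed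

lemma pi_down_kernel_contracts_edges:
  assumes "orientation n E" "\<forall>b. 2 \<le> b \<and> b \<le> n - 1 \<longrightarrow> (up b \<longleftrightarrow> E b (b - 1))"
  shows "contracts_edges n E (pi_down_kernel n up)"
  unfolding contracts_edges_def
  using edge_pair_cambrian_step[OF assms] cambrian_steps_in_pi_down_kernel
  by (blast elim: cambrian_stepE)

lemma lattice_cong_contracted_gap_two:
  assumes R: "lattice_cong n R" and edges: "contracts_edges n E R"
    and ori: "orientation n E" and upE: "\<forall>b. 2 \<le> b \<and> b \<le> n - 1 \<longrightarrow> (up b \<longleftrightarrow> E b (b - 1))"
    and x: "x \<in> perms n" and p: "p + 1 < n" and vals: "x ! p = a" "x ! (p + 1) = a + 2"
    and q: "q < n" "x ! q = a + 1" and side: "q < p \<and> up (a + 1) \<or> p + 1 < q \<and> \<not> up (a + 1)"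
  shows "(x, swap_at x p) \<in> R"
proof -
  have a: "1 \<le> a" "a + 2 \<le> n"
    using perms_nth_range[OF x, of p] perms_nth_range[OF x, of "p + 1"] p vals by auto
  have asc: "x ! p < x ! (p + 1)"
    using vals by simp
  show ?thesis
  proof (cases "up (a + 1)")
    case True
    then have "(a, a + 1) \<in> inversions x"
      using perms_inversion[OF x, of q p] side p q vals by auto
    moreover have "(stransp n a, swap_at (stransp n a) a) \<in> R"
      using edges True orientation_edge_iff(1)[OF ori upE a] pmult_stransp_Suc[OF a]
      unfolding contracts_edges_def by metis
    moreover have "inversions (stransp n a) = {(a, a + 1)}"
      using inversions_stransp a by simp
    ultimately show ?thesis
      using lattice_cong_swap_by_join[OF R _ x p asc] inversions_swap_at_stransp[OF a] vals
      by simp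
  next
    case False
    then have "(a + 1, a + 2) \<in> inversions x"
      using perms_inversion[OF x, of "p + 1" q] side q vals by auto
    moreover have "(stransp n (a + 1), swap_at (stransp n (a + 1)) (a - 1)) \<in> R"
      using edges False orientation_edge_iff(2)[OF ori upE a] pmult_Suc_stransp[OF a]
      unfolding contracts_edges_def by metis
    moreover have "inversions (stransp n (a + 1)) = {(a + 1, a + 2)}"
      using inversions_stransp a by simp
    ultimately show ?thesis
      using lattice_cong_swap_by_join[OF R _ x p asc] inversions_swap_at_Suc_stransp[OF a] vals
      by simp
  qed
qed

lemma lattice_cong_contracted_left_adjacent:
  assumes R: "lattice_cong n R"
    and smaller: "\<And>z r. z \<in> perms n \<Longrightarrow> r + 1 < n \<Longrightarrow> contracted_at up z r \<Longrightarrow>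
      z ! (r + 1) - z ! r < b - a \<Longrightarrow> (z, swap_at z r) \<in> R"
    and y: "y \<in> perms n" and p: "p + 2 < n"
    and vals: "y ! p = d" "y ! (p + 1) = a" "y ! (p + 2) = b" and ad: "a < d" and db: "d < b"
    and q: "q < n" "y ! q = c" "a < c" "c < b" "c \<noteq> d"
    and side: "q < p + 1 \<and> up c \<or> p + 2 < q \<and> \<not> up c"
  shows "(y, swap_at y (p + 1)) \<in> R"
proof -
  define h where "h = swap_at y p"
  have p1: "p + 1 < n" "p + 1 + 1 < n" and len: "length y = n"
    using p length_perms[OF y] by auto
  have q_far: "q \<noteq> p" "q \<noteq> p + 1" "q \<noteq> p + 2"
    using q vals by auto
  have h: "h \<in> perms n"
    unfolding h_def using swap_at_in_perms[OF y p1(1)] .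
  have h_vals: "h ! (p + 1) = d" "h ! (p + 2) = b" "h ! q = c"
    unfolding h_def using vals q q_far len p by auto
  show ?thesis
  proof (cases "d < c")
    case True
    have "(h, swap_at h (p + 1)) \<in> R"
      by (rule smaller[OF h p1(2)], rule contracted_atI[where q = q and c = c])
        (use h_vals q side True ad length_perms[OF h] in auto)
    then show ?thesis
      using lattice_cong_hexagon_left_low[OF R y p vals ad db] unfolding h_def by simp
  next
    case False
    define t where "t = swap_at (swap_at h (p + 1)) p"
    have t: "t \<in> perms n"
      unfolding t_def using swap_at_in_perms h p1 by auto
    have t_vals: "t ! (p + 1) = a" "t ! (p + 2) = d" "t ! q = c"
      unfolding t_def h_def using vals q q_far len p by auto
    have "(t, swap_at t (p + 1)) \<in> R"
      by (rule smaller[OF t p1(2)], rule contracted_atI[where q = q and c = c])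
        (use t_vals q side False ad db length_perms[OF t] in auto)
    then show ?thesis
      using lattice_cong_hexagon_left_high[OF R y p vals ad db] unfolding t_def h_def by simp
  qed
qed

lemma lattice_cong_contracted_right_adjacent:
  assumes R: "lattice_cong n R"
    and smaller: "\<And>z r. z \<in> perms n \<Longrightarrow> r + 1 < n \<Longrightarrow> contracted_at up z r \<Longrightarrow>
      z ! (r + 1) - z ! r < b - a \<Longrightarrow> (z, swap_at z r) \<in> R"
    and y: "y \<in> perms n" and p: "p + 2 < n"
    and vals: "y ! p = a" "y ! (p + 1) = b" "y ! (p + 2) = d" and ad: "a < d" and db: "d < b"
    and q: "q < n" "y ! q = c" "a < c" "c < b" "c \<noteq> d"
    and side: "q < p \<and> up c \<or> p + 1 < q \<and> \<not> up c"
  shows "(y, swap_at y p) \<in> R"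
proof -
  define h where "h = swap_at y (p + 1)"
  have p1: "p + 1 < n" "p + 1 + 1 < n" and len: "length y = n"
    using p length_perms[OF y] by auto
  have q_far: "q \<noteq> p" "q \<noteq> p + 1" "q \<noteq> p + 2"
    using q vals by auto
  have h: "h \<in> perms n"
    unfolding h_def using swap_at_in_perms[OF y p1(2)] .
  have h_vals: "h ! p = a" "h ! (p + 1) = d" "h ! q = c"
    unfolding h_def using vals q q_far len p by auto
  show ?thesis
  proof (cases "c < d")
    case True
    have "(h, swap_at h p) \<in> R"
      by (rule smaller[OF h p1(1)], rule contracted_atI[where q = q and c = c])
        (use h_vals q q_far side True db length_perms[OF h] in auto)
    then show ?thesis
      using lattice_cong_hexagon_right_low[OF R y p vals ad db] unfolding h_def by simp
  next
    case False
    define t where "t = swap_at (swap_at h p) (p + 1)"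
    have t: "t \<in> perms n"
      unfolding t_def using swap_at_in_perms h p1 by auto
    have t_vals: "t ! p = d" "t ! (p + 1) = b" "t ! q = c"
      unfolding t_def h_def using vals q q_far len p by auto
    have "(t, swap_at t p) \<in> R"
      by (rule smaller[OF t p1(1)], rule contracted_atI[where q = q and c = c])
        (use t_vals q q_far side False ad db length_perms[OF t] in auto)
    then show ?thesis
      using lattice_cong_hexagon_right_high[OF R y p vals ad db] unfolding t_def h_def by simp
  qed
qed

lemma swap_at_moves_witness:
  assumes y: "y \<in> perms n" and r: "r + 1 < n" and q: "q < n" "y ! q = c"
    and side: "q < p \<and> up c \<or> p + 1 < q \<and> \<not> up c" and far: "r + 1 < p \<or> p + 1 < r"
  obtains q' where "q' < n" "swap_at y r ! q' = c" "q' < p \<and> up c \<or> p + 1 < q' \<and> \<not> up c"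
proof
  define q' where "q' = (if q = r then r + 1 else if q = r + 1 then r else q)"
  show "q' < n" "swap_at y r ! q' = c" "q' < p \<and> up c \<or> p + 1 < q' \<and> \<not> up c"
    unfolding q'_def using q side far r length_perms[OF y] by (auto simp: nth_swap_at)
qed

lemma lattice_cong_contracted_left:
  assumes R: "lattice_cong n R"
    and smaller: "\<And>z r. z \<in> perms n \<Longrightarrow> r + 1 < n \<Longrightarrow> contracted_at up z r \<Longrightarrow>
      z ! (r + 1) - z ! r < b - a \<Longrightarrow> (z, swap_at z r) \<in> R"
    and ad: "a < d" and db: "d < b"
  shows "y \<in> perms n \<Longrightarrow> p + 1 < n \<Longrightarrow> y ! p = a \<Longrightarrow> y ! (p + 1) = b \<Longrightarrow>
    q < n \<Longrightarrow> y ! q = c \<Longrightarrow> a < c \<Longrightarrow> c < b \<Longrightarrow> c \<noteq> d \<Longrightarrow>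
    q < p \<and> up c \<or> p + 1 < q \<and> \<not> up c \<Longrightarrow> r < p \<Longrightarrow> y ! r = d \<Longrightarrow> (y, swap_at y p) \<in> R"
proof (induction "p - 1 - r" arbitrary: y q r)
  case 0
  then have "p = r + 1"
    by simp
  then show ?case
    using lattice_cong_contracted_left_adjacent[OF R smaller, where y = y and p = r and q = q and c = c and d = d] 0 ad db by simp
next
  case (Suc m)
  then have r: "r + 1 < p" "r + 1 < n"
    by simp_all
  obtain q' where q': "q' < n" "swap_at y r ! q' = c" "q' < p \<and> up c \<or> p + 1 < q' \<and> \<not> up c"
    using swap_at_moves_witness[where up = up and p = p, OF Suc.prems(1) r(2) Suc.prems(5,6,10)] r by blast
  have "(swap_at y r, swap_at (swap_at y r) p) \<in> R"
  proof (rule Suc.hyps(1)[of "r + 1" "swap_at y r" q'])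
    show "swap_at y r ! p = a" "swap_at y r ! (p + 1) = b" "swap_at y r ! (r + 1) = d"
      using Suc.prems r length_perms[OF Suc.prems(1)] by auto
  qed (use Suc q' r swap_at_in_perms in auto)
  then show ?case
    using lattice_cong_square[OF R Suc.prems(1,2) _ r(2)] Suc.prems(3,4,7,8) r by simp
qed

lemma lattice_cong_contracted_right:
  assumes R: "lattice_cong n R"
    and smaller: "\<And>z r. z \<in> perms n \<Longrightarrow> r + 1 < n \<Longrightarrow> contracted_at up z r \<Longrightarrow>
      z ! (r + 1) - z ! r < b - a \<Longrightarrow> (z, swap_at z r) \<in> R"
    and ad: "a < d" and db: "d < b"
  shows "y \<in> perms n \<Longrightarrow> p + 1 < n \<Longrightarrow> y ! p = a \<Longrightarrow> y ! (p + 1) = b \<Longrightarrow>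
    q < n \<Longrightarrow> y ! q = c \<Longrightarrow> a < c \<Longrightarrow> c < b \<Longrightarrow> c \<noteq> d \<Longrightarrow>
    q < p \<and> up c \<or> p + 1 < q \<and> \<not> up c \<Longrightarrow> p + 1 < r \<Longrightarrow> r < n \<Longrightarrow> y ! r = d \<Longrightarrow>
    (y, swap_at y p) \<in> R"
proof (induction "r - (p + 2)" arbitrary: y q r)
  case 0
  then have "r = p + 2"
    by simp
  then show ?case
    using lattice_cong_contracted_right_adjacent[OF R smaller, where y = y and p = p and q = q and c = c and d = d] 0 ad db by simp
next
  case (Suc m)
  define r' where "r' = r - 1"
  have r': "p + 1 < r'" "r' + 1 < n" "r' + 1 = r"
    using Suc unfolding r'_def by simp_all
  obtain q' where q': "q' < n" "swap_at y r' ! q' = c" "q' < p \<and> up c \<or> p + 1 < q' \<and> \<not> up c"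
    using swap_at_moves_witness[where up = up and p = p, OF Suc.prems(1) r'(2) Suc.prems(5,6,10)] r' by blast
  have "(swap_at y r', swap_at (swap_at y r') p) \<in> R"
  proof (rule Suc.hyps(1)[of r' "swap_at y r'" q'])
    show "swap_at y r' ! p = a" "swap_at y r' ! (p + 1) = b" "swap_at y r' ! r' = d"
      using Suc.prems r' length_perms[OF Suc.prems(1)] by auto
  qed (use Suc q' r' swap_at_in_perms in auto)
  then show ?case
    using lattice_cong_square[OF R Suc.prems(1,2) _ r'(2)] Suc.prems(3,4,7,8) r' by simp
qed

lemma lattice_cong_contracted_wide:
  assumes R: "lattice_cong n R"
    and smaller: "\<And>z r. z \<in> perms n \<Longrightarrow> r + 1 < n \<Longrightarrow> contracted_at up z r \<Longrightarrow>
      z ! (r + 1) - z ! r < b - a \<Longrightarrow> (z, swap_at z r) \<in> R"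
    and x: "x \<in> perms n" and p: "p + 1 < n" and vals: "x ! p = a" "x ! (p + 1) = b"
    and q: "q < n" "x ! q = c" "a < c" "c < b" and side: "q < p \<and> up c \<or> p + 1 < q \<and> \<not> up c"
    and wide: "b \<noteq> a + 2"
  shows "(x, swap_at x p) \<in> R"
proof -
  define d where "d = (if c = a + 1 then a + 2 else a + 1)"
  have d: "a < d" "d < b" "c \<noteq> d"
    using q wide unfolding d_def by auto
  moreover have "b \<le> n"
    using perms_nth_range[OF x, of "p + 1"] p vals by simp
  ultimately obtain r where r: "r < n" "x ! r = d"
    using perms_position[OF x, of d] by auto
  then have "r \<noteq> p" "r \<noteq> p + 1"
    using d vals by auto
  then consider "r < p" | "p + 1 < r"
    by linarith
  then show ?thesis
  proof cases
    case 1
    show ?thesis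
      by (rule lattice_cong_contracted_left[OF R smaller d(1,2) x p])
        (use vals q side d r 1 in auto)
  next
    case 2
    show ?thesis
      by (rule lattice_cong_contracted_right[OF R smaller d(1,2) x p])
        (use vals q side d r 2 in auto)
  qed
qed

text \<open>Induction on the gap b - a of the contracted ascent (a, b). For b = a + 2 it is a
  generating pair, moved into place by a join. Otherwise a value d strictly between a and b
  other than the witness c is moved next to the pair by commuting swaps; one of the two
  hexagons on a, d, b then reduces the claim to the ascent (a, d) or (d, b), still witnessed
  by c.\<close>

lemma cambrian_step_in_lattice_cong:
  assumes R: "lattice_cong n R" and edges: "contracts_edges n E R"
    and ori: "orientation n E" and upE: "\<forall>b. 2 \<le> b \<and> b \<le> n - 1 \<longrightarrow> (up b \<longleftrightarrow> E b (b - 1))"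
    and step: "(x, y) \<in> cambrian_step n up"
  shows "(x, y) \<in> R"
proof -
  have "x \<in> perms n \<Longrightarrow> p + 1 < n \<Longrightarrow> contracted_at up x p \<Longrightarrow> (x, swap_at x p) \<in> R" for x p
  proof (induction "x ! (p + 1) - x ! p" arbitrary: x p rule: less_induct)
    case less
    note x = less.prems(1) and p = less.prems(2)
    obtain q c where q: "q < n" "x ! q = c" "x ! p < c" "c < x ! (p + 1)"
      and side: "q < p \<and> up c \<or> p + 1 < q \<and> \<not> up c"
      using less.prems(3) length_perms[OF x] by (auto elim: contracted_atE)
    show ?case
    proof (cases "x ! (p + 1) = x ! p + 2")
      case True
      then have c: "c = x ! p + 1"
        using q by simp
      show ?thesis
        by (rule lattice_cong_contracted_gap_two[OF R edges ori upE x p refl True q(1)])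
          (use side q c in simp_all)
    next
      case False
      show ?thesis
      proof (rule lattice_cong_contracted_wide[where up = up, OF R _ x p refl refl q side False])
        show "(z, swap_at z r) \<in> R" if "z \<in> perms n" "r + 1 < n" "contracted_at up z r"
          "z ! (r + 1) - z ! r < x ! (p + 1) - x ! p" for z r
          using less.hyps that by blast
      qed
    qed
  qed
  then show ?thesis
    using step by (auto elim: cambrian_stepE)
qed

lemma lattice_cong_contains_cambrian_steps:
  assumes R: "lattice_cong n R" and edges: "contracts_edges n E R"
    and ori: "orientation n E" and upE: "\<forall>b. 2 \<le> b \<and> b \<le> n - 1 \<longrightarrow> (up b \<longleftrightarrow> E b (b - 1))"
    and steps: "(x, y) \<in> (cambrian_step n up)\<^sup>*" and x: "x \<in> perms n"
  shows "(x, y) \<in> R"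
  using steps
proof (induction rule: rtrancl_induct)
  case base
  show ?case
    using lattice_cong_refl[OF R x] .
next
  case (step y z)
  then show ?case
    using lattice_cong_trans[OF R] cambrian_step_in_lattice_cong[OF R edges ori upE] by blast
qed

section \<open>The Cambrian lattice\<close>

lemma cambrian_cong_eq_pi_down_kernel:
  assumes ori: "orientation n E" and upE: "\<forall>b. 2 \<le> b \<and> b \<le> n - 1 \<longrightarrow> (up b \<longleftrightarrow> E b (b - 1))"
  shows "cambrian_cong n E = pi_down_kernel n up"
proof
  show "cambrian_cong n E \<subseteq> pi_down_kernel n up"
    using lattice_cong_pi_down_kernel pi_down_kernel_contracts_edges[OF ori upE]
    unfolding cambrian_cong_def contracts_edges_def by blast
  show "pi_down_kernel n up \<subseteq> cambrian_cong n E"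
  proof (rule subrelI)
    fix x y assume "(x, y) \<in> pi_down_kernel n up"
    then have x: "x \<in> perms n" and y: "y \<in> perms n"
      and eq: "pi_down up (inversions x) = pi_down up (inversions y)"
      unfolding pi_down_kernel_def by auto
    obtain b b' where b: "b \<in> avoiders n up" "(b, x) \<in> (cambrian_step n up)\<^sup>*"
      and b': "b' \<in> avoiders n up" "(b', y) \<in> (cambrian_step n up)\<^sup>*"
      using exists_avoider_below x y by metis
    have "b' = b"
      using avoiders_eq_if_pi_down_eq[OF b(1) b'(1)] cambrian_steps_pi_down b b' eq by metis
    have b_perm: "b \<in> perms n"
      using b(1) avoiders_subset_perms by blast
    show "(x, y) \<in> cambrian_cong n E"
      unfolding cambrian_cong_def
    proof (intro InterI, clarify)
      fix R assume R: "lattice_cong n R"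
        and gen: "\<forall>i j. E i j \<longrightarrow> (stransp n j, pmult (stransp n j) (stransp n i)) \<in> R"
      then have "(b, x) \<in> R" "(b, y) \<in> R"
        using lattice_cong_contains_cambrian_steps[OF R _ ori upE _ b_perm] b(2) b'(2) \<open>b' = b\<close>
        unfolding contracts_edges_def by auto
      then show "(x, y) \<in> R"
        using lattice_cong_sym[OF R] lattice_cong_trans[OF R] by blast
    qed
  qed
qed

lemma avoiders_class_bij:
  "bij_betw (\<lambda>b. pi_down_kernel n up `` {b}) (avoiders n up) (perms n // pi_down_kernel n up)"
proof (rule bij_betw_imageI)
  have eqv: "equiv (perms n) (pi_down_kernel n up)"
    using lattice_cong_pi_down_kernel unfolding lattice_cong_def by blast
  show "inj_on (\<lambda>b. pi_down_kernel n up `` {b}) (avoiders n up)"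
  proof (rule inj_onI)
    fix b b' assume b: "b \<in> avoiders n up" and b': "b' \<in> avoiders n up"
      and cls: "pi_down_kernel n up `` {b} = pi_down_kernel n up `` {b'}"
    have "(b', b') \<in> pi_down_kernel n up"
      using b' avoiders_subset_perms unfolding pi_down_kernel_def by auto
    then have "(b, b') \<in> pi_down_kernel n up"
      using cls by blast
    then show "b = b'"
      using avoiders_eq_if_pi_down_eq[OF b b'] unfolding pi_down_kernel_def by simp
  qed
  show "(\<lambda>b. pi_down_kernel n up `` {b}) ` avoiders n up = perms n // pi_down_kernel n up"
  proof
    show "(\<lambda>b. pi_down_kernel n up `` {b}) ` avoiders n up \<subseteq> perms n // pi_down_kernel n up"
      using avoiders_subset_perms by (auto intro: quotientI)
    show "perms n // pi_down_kernel n up \<subseteq> (\<lambda>b. pi_down_kernel n up `` {b}) ` avoiders n up"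
    proof
      fix X assume "X \<in> perms n // pi_down_kernel n up"
      then obtain x where x: "x \<in> perms n" "X = pi_down_kernel n up `` {x}"
        by (auto elim: quotientE)
      obtain b where b: "b \<in> avoiders n up" "(b, x) \<in> (cambrian_step n up)\<^sup>*"
        using exists_avoider_below[OF x(1)] .
      then have "(b, x) \<in> pi_down_kernel n up"
        using cambrian_steps_in_pi_down_kernel avoiders_subset_perms by blast
      then have "X = pi_down_kernel n up `` {b}"
        using equiv_class_eq[OF eqv] x(2) by simp
      then show "X \<in> (\<lambda>b. pi_down_kernel n up `` {b}) ` avoiders n up"
        using b(1) by blast
    qed
  qed
qed

lemma quot_le_avoiders_iff:
  assumes b: "b \<in> avoiders n up" and b': "b' \<in> avoiders n up"
  shows "quot_le n (pi_down_kernel n up) (pi_down_kernel n up `` {b}) (pi_down_kernel n up `` {b'})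
    \<longleftrightarrow> weak_le b b'"
proof
  assume "quot_le n (pi_down_kernel n up) (pi_down_kernel n up `` {b}) (pi_down_kernel n up `` {b'})"
  then obtain y m where y: "(b', y) \<in> pi_down_kernel n up" and m: "(b, m) \<in> pi_down_kernel n up"
    and meet: "inversions m \<subseteq> inversions y"
    unfolding quot_le_def is_meet_def weak_le_def by blast
  have "inversions b = pi_down up (inversions m)"
    using m pi_down_avoider[OF b] unfolding pi_down_kernel_def by simp
  also have "\<dots> \<subseteq> pi_down up (inversions y)"
    using pi_down_mono[OF meet] .
  also have "\<dots> = inversions b'"
    using y pi_down_avoider[OF b'] unfolding pi_down_kernel_def by simp
  finally show "weak_le b b'"
    unfolding weak_le_def .
next
  assume le: "weak_le b b'"
  have "b \<in> perms n" "b' \<in> perms n"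
    using b b' avoiders_subset_perms by auto
  then have "b \<in> pi_down_kernel n up `` {b}" "b' \<in> pi_down_kernel n up `` {b'}"
    "is_meet n b b' b"
    using is_meet_left le unfolding pi_down_kernel_def weak_le_def by auto
  then show "quot_le n (pi_down_kernel n up) (pi_down_kernel n up `` {b}) (pi_down_kernel n up `` {b'})"
    unfolding quot_le_def by blast
qed

theorem theorem6p4:
  fixes n :: nat and E :: "nat \<Rightarrow> nat \<Rightarrow> bool" and up :: "nat \<Rightarrow> bool"
  assumes "orientation n E"
    and "\<forall>b. 2 \<le> b \<and> b \<le> n - 1 \<longrightarrow> (up b \<longleftrightarrow> E b (b - 1))"
  shows "\<exists>f. bij_betw f (perms n // cambrian_cong n E) (avoiders n up) \<and>
    (\<forall>X \<in> perms n // cambrian_cong n E. \<forall>Y \<in> perms n // cambrian_cong n E.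
       quot_le n (cambrian_cong n E) X Y \<longleftrightarrow> weak_le (f X) (f Y))"
proof -
  let ?K = "pi_down_kernel n up"
  define g where "g b = ?K `` {b}" for b
  define f where "f = inv_into (avoiders n up) g"
  have g: "bij_betw g (avoiders n up) (perms n // ?K)"
    unfolding g_def by (rule avoiders_class_bij)
  have f: "bij_betw f (perms n // ?K) (avoiders n up)"
    unfolding f_def by (rule bij_betw_inv_into[OF g])
  have "quot_le n ?K X Y \<longleftrightarrow> weak_le (f X) (f Y)" if "X \<in> perms n // ?K" "Y \<in> perms n // ?K" for X Y
  proof -
    have "f X \<in> avoiders n up" "f Y \<in> avoiders n up" "g (f X) = X" "g (f Y) = Y"
      using that f g unfolding f_def by (auto simp: bij_betw_def f_inv_into_f inv_into_into)
    then show ?thesis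
      using quot_le_avoiders_iff unfolding g_def by metis
  qed
  then show ?thesis
    unfolding cambrian_cong_eq_pi_down_kernel[OF assms] using f by blast
qed

end
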